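(* If $R=X^\dagger X$ with $X=\bigoplus_k(I_{\mathcal H_k}\otimes X_k)\in\mathcal A'_G$ is extremal in $\mathcal C_{K_0}$ and $S=\{k:X_k\ne0\}$, then $\sum_{k\in S}\operatorname{rank}(X_k)^2\le\dim(\mathcal H)^2$.
   Context: Let $\mathcal H,\mathcal K$ be finite-dimensional Hilbert spaces and $g\mapsto U_g$, $g\mapsto V_g$ unitary representations of a group $G$ on $\mathcal H$ and $\mathcal K$; $U_g^*$ is the complex conjugate in a fixed basis. Decompose $\mathcal K\otimes\mathcal H=\bigoplus_k(\mathcal H_k\otimes\mathbb C^{m_k})$ according to the equivalence classes $k$ of irreducible components of $V_g\otimes U_g^*$ (irreducible space $\mathcal H_k$, multiplicity $m_k$). The commutant $\mathcal A'_G$ consists of operators $\bigoplus_k(I_{\mathcal H_k}\otimes M_k)$. Fix $0\le K_0\le I_{\mathcal H}$ and let $\mathcal C_{K_0}=\{R\in\mathcal A'_G: R\ge0,\ \operatorname{Tr}_{\mathcal K}[R]=K_0\}$. *)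

theory Defs
  imports "Jordan_Normal_Form.DL_Rank" "Jordan_Normal_Form.Schur_Decomposition" "HOL-Algebra.Group"
begin

text \<open>Finite-dimensional Hilbert spaces are modelled as C^n; operators as complex matrices.
  The space K (x) H has dimension dK*dH, with basis index a*dH+b for a<dK, b<dH.\<close>

definition kron :: "complex mat \<Rightarrow> complex mat \<Rightarrow> complex mat" where
  "kron A B = mat (dim_row A * dim_row B) (dim_col A * dim_col B)
     (\<lambda>(i,j). A $$ (i div dim_row B, j div dim_col B) * B $$ (i mod dim_row B, j mod dim_col B))"

fun blockdiag :: "nat \<Rightarrow> (nat \<Rightarrow> complex mat) \<Rightarrow> complex mat" where
  "blockdiag 0 B = 0\<^sub>m 0 0"
| "blockdiag (Suc n) B = four_block_mat (blockdiag n B)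
      (0\<^sub>m (dim_row (blockdiag n B)) (dim_col (B n)))
      (0\<^sub>m (dim_row (B n)) (dim_col (blockdiag n B))) (B n)"

definition ptrace_K :: "nat \<Rightarrow> nat \<Rightarrow> complex mat \<Rightarrow> complex mat" where
  "ptrace_K dK dH R = mat dH dH (\<lambda>(b,b'). \<Sum>a<dK. R $$ (a*dH+b, a*dH+b'))"

definition psd :: "nat \<Rightarrow> complex mat \<Rightarrow> bool" where
  "psd n A \<longleftrightarrow> A \<in> carrier_mat n n \<and>
     (\<forall>v\<in>carrier_vec n. Im ((A *\<^sub>v v) \<bullet>c v) = 0 \<and> 0 \<le> Re ((A *\<^sub>v v) \<bullet>c v))"

definition unitary :: "nat \<Rightarrow> complex mat \<Rightarrow> bool" where
  "unitary n U \<longleftrightarrow> U \<in> carrier_mat n n \<and> U * mat_adjoint U = 1\<^sub>m n \<and> mat_adjoint U * U = 1\<^sub>m n"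

definition unitary_rep :: "('g, 'b) monoid_scheme \<Rightarrow> nat \<Rightarrow> ('g \<Rightarrow> complex mat) \<Rightarrow> bool" where
  "unitary_rep G n U \<longleftrightarrow> (\<forall>g\<in>carrier G. unitary n (U g)) \<and>
     (\<forall>g\<in>carrier G. \<forall>h\<in>carrier G. U (g \<otimes>\<^bsub>G\<^esub> h) = U g * U h)"

definition subspace_vec :: "nat \<Rightarrow> complex vec set \<Rightarrow> bool" where
  "subspace_vec n S \<longleftrightarrow> S \<subseteq> carrier_vec n \<and> 0\<^sub>v n \<in> S \<and>
     (\<forall>v\<in>S. \<forall>w\<in>S. v + w \<in> S) \<and> (\<forall>c. \<forall>v\<in>S. c \<cdot>\<^sub>v v \<in> S)"

definition irreducible_rep :: "('g, 'b) monoid_scheme \<Rightarrow> nat \<Rightarrow> ('g \<Rightarrow> complex mat) \<Rightarrow> bool" where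
  "irreducible_rep G n \<pi> \<longleftrightarrow> unitary_rep G n \<pi> \<and> n > 0 \<and>
     (\<forall>S. subspace_vec n S \<and> (\<forall>g\<in>carrier G. \<forall>v\<in>S. \<pi> g *\<^sub>v v \<in> S)
          \<longrightarrow> S = {0\<^sub>v n} \<or> S = carrier_vec n)"

definition equiv_rep :: "('g, 'b) monoid_scheme \<Rightarrow> nat \<Rightarrow> ('g \<Rightarrow> complex mat) \<Rightarrow> nat \<Rightarrow> ('g \<Rightarrow> complex mat) \<Rightarrow> bool" where
  "equiv_rep G n \<pi> n' \<pi>' \<longleftrightarrow> n = n' \<and>
     (\<exists>T\<in>carrier_mat n n. invertible_mat T \<and> (\<forall>g\<in>carrier G. T * \<pi> g = \<pi>' g * T))"

text \<open>The unitary W realises the decomposition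
  K (x) H = (+)_{k<n} H_k (x) C^{m k} of V_g (x) conj(U_g) into
  pairwise inequivalent irreducibles pi k (on H_k = C^{d k}) with multiplicity m k.\<close>
definition isotypic_decomp ::
  "('g, 'b) monoid_scheme \<Rightarrow> nat \<Rightarrow> nat \<Rightarrow> ('g \<Rightarrow> complex mat) \<Rightarrow> ('g \<Rightarrow> complex mat) \<Rightarrow>
   nat \<Rightarrow> (nat \<Rightarrow> nat) \<Rightarrow> (nat \<Rightarrow> nat) \<Rightarrow> (nat \<Rightarrow> 'g \<Rightarrow> complex mat) \<Rightarrow> complex mat \<Rightarrow> bool" where
  "isotypic_decomp G dK dH V U n d m \<pi> W \<longleftrightarrow>
     (\<forall>k<n. irreducible_rep G (d k) (\<pi> k) \<and> m k > 0) \<and>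
     (\<forall>k<n. \<forall>l<n. k \<noteq> l \<longrightarrow> \<not> equiv_rep G (d k) (\<pi> k) (d l) (\<pi> l)) \<and>
     (\<Sum>k<n. d k * m k) = dK * dH \<and>
     unitary (dK * dH) W \<and>
     (\<forall>g\<in>carrier G. kron (V g) (map_mat cnj (U g)) =
        W * blockdiag n (\<lambda>k. kron (\<pi> k g) (1\<^sub>m (m k))) * mat_adjoint W)"

text \<open>The element (+)_k (I_{H_k} (x) M_k) of the commutant, in the original basis.\<close>
definition comm_elem :: "nat \<Rightarrow> (nat \<Rightarrow> nat) \<Rightarrow> complex mat \<Rightarrow> (nat \<Rightarrow> complex mat) \<Rightarrow> complex mat" where
  "comm_elem n d W M = W * blockdiag n (\<lambda>k. kron (1\<^sub>m (d k)) (M k)) * mat_adjoint W"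

definition commutant :: "nat \<Rightarrow> (nat \<Rightarrow> nat) \<Rightarrow> (nat \<Rightarrow> nat) \<Rightarrow> complex mat \<Rightarrow> complex mat set" where
  "commutant n d m W = {comm_elem n d W M | M. \<forall>k<n. M k \<in> carrier_mat (m k) (m k)}"

definition C_set :: "nat \<Rightarrow> nat \<Rightarrow> nat \<Rightarrow> (nat \<Rightarrow> nat) \<Rightarrow> (nat \<Rightarrow> nat) \<Rightarrow> complex mat \<Rightarrow> complex mat \<Rightarrow> complex mat set" where
  "C_set dK dH n d m W K0 = {R \<in> commutant n d m W. psd (dK * dH) R \<and> ptrace_K dK dH R = K0}"

definition extreme_point :: "complex mat set \<Rightarrow> complex mat \<Rightarrow> bool" where
  "extreme_point C R \<longleftrightarrow> R \<in> C \<and>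
     (\<forall>R1\<in>C. \<forall>R2\<in>C. \<forall>t::real. 0 < t \<and> t < 1 \<and> R = of_real t \<cdot>\<^sub>m R1 + of_real (1 - t) \<cdot>\<^sub>m R2
        \<longrightarrow> R1 = R \<and> R2 = R)"

definition mrank :: "complex mat \<Rightarrow> nat" where
  "mrank A = vec_space.rank (dim_row A) A"

end

(*
  Write R = X^H X, where X is the block operator with blocks X_k. The map
  Z |-> Tr_K (X^H Z X) on tuples Z = (Z_k) of m_k x m_k matrices is linear with values in the
  dH x dH matrices. If sum_k rank(X_k)^2 > dH^2, choose rank(X_k) linearly independent columns
  of each X_k. The matrix units supported on these rows and columns are more than dH^2 in number,
  so some nontrivial combination C of them satisfies Tr_K (X^H (X C X^H) X) = 0, while
  X^H (X C X^H) X = (X^H X) C (X^H X) is nonzero because X_k is injective on vectors supported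
  on the chosen coordinates. The hermitian or the anti-hermitian part of X C X^H is then a
  hermitian Z with Tr_K (X^H Z X) = 0 and X^H Z X nonzero. For small e > 0 both
  R + e X^H Z X = X^H (1 + e Z) X and R - e X^H Z X are positive, lie in the commutant and have
  partial trace K0, so R is the midpoint of two distinct points of C_K0.
*)

theory Submission
  imports Defs
begin

section \<open>Adjoints, sandwiches and sesquilinear forms\<close>

lemma dim_mat_adjoint[simp]:
  "dim_row (mat_adjoint A) = dim_col A" "dim_col (mat_adjoint A) = dim_row A"
  by (simp_all add: mat_adjoint_def mat_of_rows_def)

lemma index_mat_adjoint[simp]:
  "i < dim_col A \<Longrightarrow> j < dim_row A \<Longrightarrow> mat_adjoint A $$ (i, j) = cnj (A $$ (j, i))"
  by (simp add: mat_adjoint_def mat_of_rows_def)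

lemma mat_adjoint_carrier_mat[simp]: "A \<in> carrier_mat r c \<Longrightarrow> mat_adjoint A \<in> carrier_mat c r"
  by (metis carrier_matD carrier_matI dim_mat_adjoint)

lemma mat_adjoint_mat_adjoint[simp]: "mat_adjoint (mat_adjoint (A :: complex mat)) = A"
  by (rule eq_matI) auto

lemma mat_adjoint_zero[simp]: "mat_adjoint (0\<^sub>m r c :: complex mat) = 0\<^sub>m c r"
  by (rule eq_matI) auto

lemma mat_adjoint_smult: "mat_adjoint (a \<cdot>\<^sub>m A) = cnj a \<cdot>\<^sub>m mat_adjoint (A :: complex mat)"
  by (rule eq_matI) auto

lemma mat_adjoint_add:
  "A \<in> carrier_mat r c \<Longrightarrow> B \<in> carrier_mat r c \<Longrightarrow>
   mat_adjoint (A + B) = mat_adjoint A + mat_adjoint (B :: complex mat)"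
  by (rule eq_matI) auto

lemma mat_adjoint_mult:
  assumes "A \<in> carrier_mat r s" "B \<in> carrier_mat s c"
  shows "mat_adjoint (A * B) = mat_adjoint B * mat_adjoint (A :: complex mat)"
proof (rule eq_matI)
  fix i j assume "i < dim_row (mat_adjoint B * mat_adjoint A)" "j < dim_col (mat_adjoint B * mat_adjoint A)"
  then show "mat_adjoint (A * B) $$ (i, j) = (mat_adjoint B * mat_adjoint A) $$ (i, j)"
    using assms by (auto simp: scalar_prod_def intro!: sum.cong)
qed (use assms in auto)

lemma mat_adjoint_four_block_mat:
  assumes "A \<in> carrier_mat r1 c1" "B \<in> carrier_mat r1 c2" "C \<in> carrier_mat r2 c1" "D \<in> carrier_mat r2 c2"
  shows "mat_adjoint (four_block_mat A B C D) =
    four_block_mat (mat_adjoint A) (mat_adjoint C) (mat_adjoint B) (mat_adjoint (D :: complex mat))"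
  using assms by (intro eq_matI) (auto simp: carrier_matD[OF assms(1)] carrier_matD[OF assms(4)])

lemma square_mult_carrier_mat[simp]:
  "A \<in> carrier_mat n n \<Longrightarrow> B \<in> carrier_mat n n \<Longrightarrow> A * B \<in> carrier_mat n n"
  by (rule mult_carrier_mat)

lemma mult_add_mult_distrib_mat:
  assumes "X \<in> carrier_mat r s" "A \<in> carrier_mat s s" "B \<in> carrier_mat s s" "Y \<in> carrier_mat s c"
  shows "X * (A + B) * Y = X * A * Y + X * B * (Y :: complex mat)"
  using mult_add_distrib_mat[OF assms(1-3)]
    add_mult_distrib_mat[OF mult_carrier_mat[OF assms(1,2)] mult_carrier_mat[OF assms(1,3)] assms(4)]
  by simp

lemma mult_smult_mult_mat:
  assumes "X \<in> carrier_mat r s" "A \<in> carrier_mat s s" "Y \<in> carrier_mat s c"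
  shows "X * (a \<cdot>\<^sub>m A) * Y = a \<cdot>\<^sub>m (X * A * (Y :: complex mat))"
  using mult_smult_distrib[OF assms(1,2)] mult_smult_assoc_mat[OF mult_carrier_mat[OF assms(1,2)] assms(3)]
  by simp

lemma mat_adjoint_mult_mult:
  assumes "X \<in> carrier_mat r s" "A \<in> carrier_mat s s" "Y \<in> carrier_mat s c"
  shows "mat_adjoint (X * A * Y) = mat_adjoint Y * mat_adjoint A * mat_adjoint (X :: complex mat)"
proof -
  have "mat_adjoint (X * A * Y) = mat_adjoint Y * mat_adjoint (X * A)"
    by (rule mat_adjoint_mult[OF mult_carrier_mat[OF assms(1,2)] assms(3)])
  also have "mat_adjoint (X * A) = mat_adjoint A * mat_adjoint X"
    by (rule mat_adjoint_mult[OF assms(1,2)])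
  finally show ?thesis using assms by (simp add: assoc_mult_mat[of _ c s _ s _ r])
qed

lemma gram_sandwich_assoc:
  fixes X C :: "complex mat"
  assumes X: "X \<in> carrier_mat r m" and C: "C \<in> carrier_mat m m"
  shows "mat_adjoint X * (X * C * mat_adjoint X) * X = mat_adjoint X * X * C * (mat_adjoint X * X)"
proof -
  have Xa: "mat_adjoint X \<in> carrier_mat m r" using X by simp
  have XC: "X * C \<in> carrier_mat r m" using X C by simp
  have XCXa: "X * C * mat_adjoint X \<in> carrier_mat r r" using mult_carrier_mat[OF XC Xa] .
  have XaX: "mat_adjoint X * X \<in> carrier_mat m m" using mult_carrier_mat[OF Xa X] .
  have "mat_adjoint X * (X * C * mat_adjoint X) * X = mat_adjoint X * (X * C * mat_adjoint X * X)"
    by (rule assoc_mult_mat[OF Xa XCXa X])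
  also have "X * C * mat_adjoint X * X = X * C * (mat_adjoint X * X)"
    using XC Xa X by (rule assoc_mult_mat)
  also have "mat_adjoint X * (X * C * (mat_adjoint X * X)) = mat_adjoint X * (X * C) * (mat_adjoint X * X)"
    by (rule assoc_mult_mat[OF Xa XC XaX, symmetric])
  also have "mat_adjoint X * (X * C) = mat_adjoint X * X * C"
    using Xa X C by (rule assoc_mult_mat[symmetric])
  finally show ?thesis .
qed

lemma cscalar_prod_mat_adjoint:
  assumes "A \<in> carrier_mat r c" "u \<in> carrier_vec r" "v \<in> carrier_vec c"
  shows "(mat_adjoint A *\<^sub>v u) \<bullet>c v = u \<bullet>c (A *\<^sub>v (v :: complex vec))"
proof -
  have "(mat_adjoint A *\<^sub>v u) \<bullet>c v = (\<Sum>j<c. (\<Sum>i<r. cnj (A $$ (i, j)) * u $ i) * cnj (v $ j))"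
    using assms by (auto simp: scalar_prod_def atLeast0LessThan intro!: sum.cong)
  also have "\<dots> = (\<Sum>j<c. \<Sum>i<r. u $ i * cnj (A $$ (i, j) * v $ j))"
    by (simp add: sum_distrib_left sum_distrib_right mult_ac)
  also have "\<dots> = (\<Sum>i<r. \<Sum>j<c. u $ i * cnj (A $$ (i, j) * v $ j))"
    by (rule sum.swap)
  also have "\<dots> = u \<bullet>c (A *\<^sub>v v)"
    using assms by (simp add: scalar_prod_def atLeast0LessThan sum_distrib_left)
  finally show ?thesis .
qed

lemma cscalar_prod_swap: "u \<in> carrier_vec n \<Longrightarrow> w \<in> carrier_vec n \<Longrightarrow> u \<bullet>c w = cnj (w \<bullet>c (u :: complex vec))"
  by (simp add: scalar_prod_def mult.commute)

lemma cscalar_prod_self: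
  assumes "v \<in> carrier_vec n"
  shows "v \<bullet>c v = of_real (\<Sum>i<n. (cmod (v $ i))\<^sup>2)"
proof -
  have "v \<bullet>c v = (\<Sum>i<n. v $ i * cnj (v $ i))" using assms by (simp add: scalar_prod_def atLeast0LessThan)
  also have "\<dots> = (\<Sum>i<n. of_real ((cmod (v $ i))\<^sup>2))"
    by (intro sum.cong refl) (metis complex_norm_square of_real_power)
  finally show ?thesis by simp
qed

lemma smult_mat_mult_vec:
  "Z \<in> carrier_mat n n \<Longrightarrow> w \<in> carrier_vec n \<Longrightarrow> (a \<cdot>\<^sub>m Z) *\<^sub>v w = a \<cdot>\<^sub>v (Z *\<^sub>v (w :: complex vec))"
  by (rule eq_vecI) (auto simp: scalar_prod_def sum_distrib_left mult.assoc)

lemma unitaryD: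
  assumes "unitary n W"
  shows "W \<in> carrier_mat n n" "mat_adjoint W \<in> carrier_mat n n"
    "W * mat_adjoint W = 1\<^sub>m n" "mat_adjoint W * W = 1\<^sub>m n"
  using assms by (simp_all add: unitary_def)

lemma unitary_mat_adjoint_mult_cancel:
  assumes "unitary n W" "A \<in> carrier_mat n c"
  shows "mat_adjoint W * (W * A) = A"
  using assms unitaryD[OF assms(1)] by (simp add: assoc_mult_mat[symmetric, of _ n n _ n _ c])

lemma unitary_conj_carrier_mat:
  assumes "unitary n W" "A \<in> carrier_mat n n"
  shows "W * A * mat_adjoint W \<in> carrier_mat n n"
  using assms unitaryD[OF assms(1)] by (meson mult_carrier_mat)

lemma unitary_conj_mult:
  assumes W: "unitary n W" and "A \<in> carrier_mat n n" "B \<in> carrier_mat n n"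
  shows "W * A * mat_adjoint W * (W * B * mat_adjoint W) = W * (A * B) * mat_adjoint W"
  using assms unitaryD[OF W] unitary_mat_adjoint_mult_cancel[OF W, of "B * mat_adjoint W" n]
  by (simp add: assoc_mult_mat[of _ n n _ n _ n])

lemma unitary_conj_mat_adjoint:
  assumes W: "unitary n W" and "A \<in> carrier_mat n n"
  shows "mat_adjoint (W * A * mat_adjoint W) = W * mat_adjoint A * mat_adjoint W"
  using assms unitaryD[OF W] by (simp add: mat_adjoint_mult[of _ n n _ n] assoc_mult_mat[of _ n n _ n _ n])

lemma unitary_conj_add:
  assumes W: "unitary n W" and A: "A \<in> carrier_mat n n" and B: "B \<in> carrier_mat n n"
  shows "W * (A + B) * mat_adjoint W = W * A * mat_adjoint W + W * B * mat_adjoint W"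
  using mult_add_distrib_mat[OF unitaryD(1)[OF W] A B]
    add_mult_distrib_mat[OF mult_carrier_mat mult_carrier_mat unitaryD(2)[OF W], OF unitaryD(1)[OF W] A
      unitaryD(1)[OF W] B]
  by simp

lemma unitary_conj_smult:
  assumes W: "unitary n W" and A: "A \<in> carrier_mat n n"
  shows "W * (a \<cdot>\<^sub>m A) * mat_adjoint W = a \<cdot>\<^sub>m (W * A * mat_adjoint W)"
  using mult_smult_distrib[OF unitaryD(1)[OF W] A]
    mult_smult_assoc_mat[OF mult_carrier_mat unitaryD(2)[OF W], OF unitaryD(1)[OF W] A]
  by simp

lemma unitary_conj_eq_zeroD:
  assumes W: "unitary n W" and A: "A \<in> carrier_mat n n" and "W * A * mat_adjoint W = 0\<^sub>m n n"
  shows "A = 0\<^sub>m n n"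
proof -
  have "A = mat_adjoint W * (W * A * mat_adjoint W) * W"
    using A unitaryD[OF W] unitary_mat_adjoint_mult_cancel[OF W A]
    by (simp add: assoc_mult_mat[of _ n n _ n _ n])
  then show ?thesis using assms unitaryD[OF W] by simp
qed

section \<open>Block-diagonal matrices and partial traces\<close>

lemma blockdiag_carrier_mat:
  assumes "\<And>k. k < n \<Longrightarrow> B k \<in> carrier_mat (r k) (c k)"
  shows "blockdiag n B \<in> carrier_mat (\<Sum>k<n. r k) (\<Sum>k<n. c k)"
  using assms by (induction n) (auto intro!: four_block_carrier_mat)

lemma blockdiag_cong: "(\<And>k. k < n \<Longrightarrow> A k = B k) \<Longrightarrow> blockdiag n A = blockdiag n B"
  by (induction n) auto

lemma blockdiag_mult:
  assumes "\<And>k. k < n \<Longrightarrow> A k \<in> carrier_mat (r k) (s k)" "\<And>k. k < n \<Longrightarrow> B k \<in> carrier_mat (s k) (c k)"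
  shows "blockdiag n A * blockdiag n B = blockdiag n (\<lambda>k. A k * B k)"
  using assms
proof (induction n)
  case (Suc n)
  have A: "blockdiag n A \<in> carrier_mat (\<Sum>k<n. r k) (\<Sum>k<n. s k)" "A n \<in> carrier_mat (r n) (s n)"
    and B: "blockdiag n B \<in> carrier_mat (\<Sum>k<n. s k) (\<Sum>k<n. c k)" "B n \<in> carrier_mat (s n) (c n)"
    using Suc.prems by (auto intro!: blockdiag_carrier_mat)
  have "blockdiag n (\<lambda>k. A k * B k) \<in> carrier_mat (\<Sum>k<n. r k) (\<Sum>k<n. c k)"
    using Suc.prems by (intro blockdiag_carrier_mat) (meson less_SucI mult_carrier_mat)
  then show ?case
    using Suc A B by (simp add: mult_four_block_mat[OF A(1) _ _ A(2) B(1) _ _ B(2)] carrier_matD[OF A(2)] carrier_matD[OF B(2)]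
      left_add_zero_mat[OF mult_carrier_mat[OF A(2) B(2)]])
qed (auto intro!: eq_matI)

lemma blockdiag_mat_adjoint:
  assumes "\<And>k. k < n \<Longrightarrow> A k \<in> carrier_mat (r k) (c k)"
  shows "mat_adjoint (blockdiag n A) = blockdiag n (\<lambda>k. mat_adjoint (A k))"
  using assms
proof (induction n)
  case (Suc n)
  have A: "blockdiag n A \<in> carrier_mat (\<Sum>k<n. r k) (\<Sum>k<n. c k)" "A n \<in> carrier_mat (r n) (c n)"
    and "blockdiag n (\<lambda>k. mat_adjoint (A k)) \<in> carrier_mat (\<Sum>k<n. c k) (\<Sum>k<n. r k)"
    using Suc.prems by (auto intro!: blockdiag_carrier_mat)
  then show ?case using Suc by (simp add: mat_adjoint_four_block_mat[OF A(1) _ _ A(2)] carrier_matD[OF A(2)])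
qed (auto intro!: eq_matI)

lemma blockdiag_add:
  assumes "\<And>k. k < n \<Longrightarrow> A k \<in> carrier_mat (r k) (c k)" "\<And>k. k < n \<Longrightarrow> B k \<in> carrier_mat (r k) (c k)"
  shows "blockdiag n (\<lambda>k. A k + B k) = blockdiag n A + blockdiag n B"
  using assms
proof (induction n)
  case (Suc n)
  have A: "blockdiag n A \<in> carrier_mat (\<Sum>k<n. r k) (\<Sum>k<n. c k)" "A n \<in> carrier_mat (r n) (c n)"
    and B: "blockdiag n B \<in> carrier_mat (\<Sum>k<n. r k) (\<Sum>k<n. c k)" "B n \<in> carrier_mat (r n) (c n)"
    using Suc.prems by (auto intro!: blockdiag_carrier_mat)
  then show ?case using Suc by (simp add: add_four_block_mat[OF A(1) _ _ A(2) B(1) _ _ B(2)] carrier_matD[OF A(2)] carrier_matD[OF B(2)])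
qed (auto intro!: eq_matI)

lemma blockdiag_smult:
  assumes "\<And>k. k < n \<Longrightarrow> A k \<in> carrier_mat (r k) (c k)"
  shows "blockdiag n (\<lambda>k. a \<cdot>\<^sub>m A k) = a \<cdot>\<^sub>m blockdiag n A"
  using assms
proof (induction n)
  case (Suc n)
  have A: "blockdiag n A \<in> carrier_mat (\<Sum>k<n. r k) (\<Sum>k<n. c k)" "A n \<in> carrier_mat (r n) (c n)"
    using Suc.prems by (auto intro!: blockdiag_carrier_mat)
  then show ?case using Suc by (simp add: smult_four_block_mat[OF A(1) _ _ A(2)] carrier_matD[OF A(2)])
qed (auto intro!: eq_matI)

lemma blockdiag_eq_zeroD:
  assumes "\<And>k. k < n \<Longrightarrow> A k \<in> carrier_mat (r k) (c k)"
    and "blockdiag n A = 0\<^sub>m (\<Sum>k<n. r k) (\<Sum>k<n. c k)" and "k < n"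
  shows "A k = 0\<^sub>m (r k) (c k)"
  using assms
proof (induction n)
  case (Suc n)
  have bd: "blockdiag n A \<in> carrier_mat (\<Sum>k<n. r k) (\<Sum>k<n. c k)"
    using Suc.prems by (auto intro!: blockdiag_carrier_mat)
  have An: "A n \<in> carrier_mat (r n) (c n)" using Suc.prems by simp
  have upper: "blockdiag n A $$ (i, j) = 0" if "i < (\<Sum>k<n. r k)" "j < (\<Sum>k<n. c k)" for i j
    using arg_cong[OF Suc.prems(2), of "\<lambda>M. M $$ (i, j)"] that bd An by simp
  have lower: "A n $$ (i, j) = 0" if "i < r n" "j < c n" for i j
    using arg_cong[OF Suc.prems(2), of "\<lambda>M. M $$ (i + (\<Sum>k<n. r k), j + (\<Sum>k<n. c k))"] that bd An
    by simp
  show ?case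
  proof (cases "k = n")
    case True
    then show ?thesis using An lower by (intro eq_matI) auto
  next
    case False
    have "blockdiag n A = 0\<^sub>m (\<Sum>k<n. r k) (\<Sum>k<n. c k)" using bd upper by (intro eq_matI) auto
    with Suc.prems False show ?thesis by (metis Suc.IH less_Suc_eq)
  qed
qed simp

lemma dim_kron[simp]:
  "dim_row (kron A B) = dim_row A * dim_row B" "dim_col (kron A B) = dim_col A * dim_col B"
  by (simp_all add: kron_def)

lemma kron_one_eq_blockdiag:
  assumes A: "A \<in> carrier_mat r c"
  shows "kron (1\<^sub>m d) A = blockdiag d (\<lambda>_. A)"
proof (induction d)
  case 0
  show ?case by (rule eq_matI) (auto simp: kron_def)
next
  case (Suc d)
  have "kron (1\<^sub>m (Suc d)) A = four_block_mat (kron (1\<^sub>m d) A) (0\<^sub>m (d * r) c) (0\<^sub>m r (d * c)) A"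
  proof (rule eq_matI)
    fix i j assume "i < dim_row (four_block_mat (kron (1\<^sub>m d) A) (0\<^sub>m (d * r) c) (0\<^sub>m r (d * c)) A)"
      "j < dim_col (four_block_mat (kron (1\<^sub>m d) A) (0\<^sub>m (d * r) c) (0\<^sub>m r (d * c)) A)"
    then have i: "i < r + d * r" and j: "j < c + d * c" using A by auto
    have div_last: "x div s = d" "x mod s = x - d * s" if "d * s \<le> x" "x < s + d * s" for x s
    proof -
      show *: "x div s = d" using that by (intro div_nat_eqI) (simp_all add: mult.commute)
      show "x mod s = x - d * s" by (simp add: * minus_div_mult_eq_mod[symmetric])
    qed
    have div_less: "x div s < d" if "x < d * s" for x s
      using that by (simp add: less_mult_imp_div_less mult.commute)
    show "kron (1\<^sub>m (Suc d)) A $$ (i, j) = four_block_mat (kron (1\<^sub>m d) A) (0\<^sub>m (d * r) c) (0\<^sub>m r (d * c)) A $$ (i, j)"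
      using A i j div_last[of r i] div_last[of c j] div_less[of i r] div_less[of j c]
      by (cases "i < d * r"; cases "j < d * c") (auto simp: kron_def)
  qed (use A in auto)
  also have "\<dots> = blockdiag (Suc d) (\<lambda>_. A)"
    using A blockdiag_carrier_mat[of d "\<lambda>_. A" "\<lambda>_. r" "\<lambda>_. c"] by (simp add: Suc)
  finally show ?case .
qed

lemma kron_one_carrier_mat: "A \<in> carrier_mat r c \<Longrightarrow> kron (1\<^sub>m d) A \<in> carrier_mat (d * r) (d * c)"
  by (intro carrier_matI) auto

lemma kron_one_mult:
  assumes A: "A \<in> carrier_mat r s" and B: "B \<in> carrier_mat s c"
  shows "kron (1\<^sub>m d) A * kron (1\<^sub>m d) B = kron (1\<^sub>m d) (A * B)"
  using A B by (simp add: kron_one_eq_blockdiag[OF A] kron_one_eq_blockdiag[OF B]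
      kron_one_eq_blockdiag[OF mult_carrier_mat[OF A B]] blockdiag_mult[where r = "\<lambda>_. r" and s = "\<lambda>_. s"])

lemma kron_one_mat_adjoint:
  assumes A: "A \<in> carrier_mat r c"
  shows "mat_adjoint (kron (1\<^sub>m d) A) = kron (1\<^sub>m d) (mat_adjoint A)"
  using A by (simp add: kron_one_eq_blockdiag[OF A] kron_one_eq_blockdiag[OF mat_adjoint_carrier_mat[OF A]]
      blockdiag_mat_adjoint[where r = "\<lambda>_. r" and c = "\<lambda>_. c"])

lemma kron_one_add:
  assumes A: "A \<in> carrier_mat r c" and B: "B \<in> carrier_mat r c"
  shows "kron (1\<^sub>m d) (A + B) = kron (1\<^sub>m d) A + kron (1\<^sub>m d) B"
  using A B by (simp add: kron_one_eq_blockdiag[OF A] kron_one_eq_blockdiag[OF B]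
      kron_one_eq_blockdiag[OF add_carrier_mat[OF B]] blockdiag_add[where r = "\<lambda>_. r" and c = "\<lambda>_. c"])

lemma kron_one_smult:
  assumes A: "A \<in> carrier_mat r c"
  shows "kron (1\<^sub>m d) (a \<cdot>\<^sub>m A) = a \<cdot>\<^sub>m kron (1\<^sub>m d) A"
  using A by (simp add: kron_one_eq_blockdiag[OF A] kron_one_eq_blockdiag[OF smult_carrier_mat[OF A]]
      blockdiag_smult[where r = "\<lambda>_. r" and c = "\<lambda>_. c"])

lemma kron_one_eq_zeroD:
  assumes "A \<in> carrier_mat r c" "0 < d" "kron (1\<^sub>m d) A = 0\<^sub>m (d * r) (d * c)"
  shows "A = 0\<^sub>m r c"
  using assms blockdiag_eq_zeroD[of d "\<lambda>_. A" "\<lambda>_. r" "\<lambda>_. c" 0] by (simp add: kron_one_eq_blockdiag)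

lemma tensor_index_less:
  assumes "a < dK" "b < (dH :: nat)"
  shows "a * dH + b < dK * dH"
proof -
  have "a * dH + b < Suc a * dH" using assms(2) by simp
  also have "\<dots> \<le> dK * dH" using assms(1) by (intro mult_le_mono1) simp
  finally show ?thesis .
qed

lemma ptrace_K_carrier_mat[simp]: "ptrace_K dK dH R \<in> carrier_mat dH dH"
  by (simp add: ptrace_K_def)

lemma ptrace_K_add:
  assumes "A \<in> carrier_mat (dK * dH) (dK * dH)" "B \<in> carrier_mat (dK * dH) (dK * dH)"
  shows "ptrace_K dK dH (A + B) = ptrace_K dK dH A + ptrace_K dK dH B"
  by (rule eq_matI) (use assms tensor_index_less in \<open>auto simp: ptrace_K_def sum.distrib\<close>)

lemma ptrace_K_smult:
  assumes "A \<in> carrier_mat (dK * dH) (dK * dH)"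
  shows "ptrace_K dK dH (a \<cdot>\<^sub>m A) = a \<cdot>\<^sub>m ptrace_K dK dH A"
  by (rule eq_matI) (use assms tensor_index_less in \<open>auto simp: ptrace_K_def sum_distrib_left\<close>)

lemma ptrace_K_mat_adjoint:
  assumes "A \<in> carrier_mat (dK * dH) (dK * dH)"
  shows "ptrace_K dK dH (mat_adjoint A) = mat_adjoint (ptrace_K dK dH A)"
  by (rule eq_matI) (use assms tensor_index_less in \<open>auto simp: ptrace_K_def\<close>)

section \<open>Positivity and extreme points\<close>

lemma hermitian_quadratic_form_real:
  fixes A :: "complex mat"
  assumes A: "A \<in> carrier_mat n n" and herm: "mat_adjoint A = A" and v: "v \<in> carrier_vec n"
  shows "Im ((A *\<^sub>v v) \<bullet>c v) = 0"
proof -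
  have "(A *\<^sub>v v) \<bullet>c v = v \<bullet>c (A *\<^sub>v v)"
    using cscalar_prod_mat_adjoint[OF A v v] herm by simp
  also have "\<dots> = cnj ((A *\<^sub>v v) \<bullet>c v)" using A v by (intro cscalar_prod_swap) auto
  finally show ?thesis by (metis cnj.simps(2) neg_equal_zero)
qed

lemma cmod_quadratic_form_le:
  fixes Z :: "complex mat"
  assumes Z: "Z \<in> carrier_mat n n" and w: "w \<in> carrier_vec n"
  shows "cmod ((Z *\<^sub>v w) \<bullet>c w) \<le> (\<Sum>i<n. \<Sum>j<n. cmod (Z $$ (i, j))) * (\<Sum>i<n. (cmod (w $ i))\<^sup>2)"
proof -
  define s where "s = (\<Sum>i<n. (cmod (w $ i))\<^sup>2)"
  have s: "0 \<le> s" unfolding s_def by (intro sum_nonneg) auto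
  have entry: "cmod (w $ i) \<le> sqrt s" if "i < n" for i
    using member_le_sum[of i "{..<n}" "\<lambda>i. (cmod (w $ i))\<^sup>2"] that by (simp add: s_def real_le_rsqrt)
  have "cmod (w $ j) * cmod (w $ i) \<le> s" if "i < n" "j < n" for i j
    using mult_mono[OF entry[OF that(2)] entry[OF that(1)]] s by simp
  then have bound: "cmod (Z $$ (i, j) * w $ j * cnj (w $ i)) \<le> cmod (Z $$ (i, j)) * s" if "i < n" "j < n" for i j
    using that by (simp add: norm_mult mult.assoc mult_left_mono)
  have "(Z *\<^sub>v w) \<bullet>c w = (\<Sum>i<n. \<Sum>j<n. Z $$ (i, j) * w $ j * cnj (w $ i))"
    using Z w by (simp add: scalar_prod_def atLeast0LessThan sum_distrib_right)
  then have "cmod ((Z *\<^sub>v w) \<bullet>c w) \<le> (\<Sum>i<n. cmod (\<Sum>j<n. Z $$ (i, j) * w $ j * cnj (w $ i)))"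
    by (simp add: norm_sum)
  also have "\<dots> \<le> (\<Sum>i<n. \<Sum>j<n. cmod (Z $$ (i, j) * w $ j * cnj (w $ i)))"
    by (intro sum_mono norm_sum)
  also have "\<dots> \<le> (\<Sum>i<n. \<Sum>j<n. cmod (Z $$ (i, j)) * s)"
    using bound by (intro sum_mono) auto
  finally show ?thesis by (simp add: s_def sum_distrib_right)
qed

lemma psd_one_plus_smult_hermitian:
  fixes Z :: "complex mat"
  assumes Z: "Z \<in> carrier_mat n n" and herm: "mat_adjoint Z = Z"
    and small: "\<bar>s\<bar> * (\<Sum>i<n. \<Sum>j<n. cmod (Z $$ (i, j))) \<le> 1"
  shows "psd n (1\<^sub>m n + of_real s \<cdot>\<^sub>m Z)"
  unfolding psd_def
proof (intro conjI ballI)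
  fix w :: "complex vec" assume w: "w \<in> carrier_vec n"
  define q where "q = (Z *\<^sub>v w) \<bullet>c w"
  define nw where "nw = (\<Sum>i<n. (cmod (w $ i))\<^sup>2)"
  have "(1\<^sub>m n + of_real s \<cdot>\<^sub>m Z) *\<^sub>v w = w + of_real s \<cdot>\<^sub>v (Z *\<^sub>v w)"
    using Z w by (simp add: add_mult_distrib_mat_vec[of _ n n] smult_mat_mult_vec)
  then have form: "((1\<^sub>m n + of_real s \<cdot>\<^sub>m Z) *\<^sub>v w) \<bullet>c w = of_real nw + of_real s * q"
    using Z w cscalar_prod_self[OF w] by (simp add: add_scalar_prod_distrib[of _ n] q_def nw_def)
  have "Im q = 0" unfolding q_def by (rule hermitian_quadratic_form_real[OF Z herm w])
  then show "Im (((1\<^sub>m n + of_real s \<cdot>\<^sub>m Z) *\<^sub>v w) \<bullet>c w) = 0" by (simp add: form)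
  have "\<bar>Re q\<bar> \<le> (\<Sum>i<n. \<Sum>j<n. cmod (Z $$ (i, j))) * nw"
    using cmod_quadratic_form_le[OF Z w] abs_Re_le_cmod order_trans unfolding q_def nw_def by blast
  then have "\<bar>s * Re q\<bar> \<le> (\<bar>s\<bar> * (\<Sum>i<n. \<Sum>j<n. cmod (Z $$ (i, j)))) * nw"
    by (simp add: abs_mult mult.assoc mult_left_mono)
  also have "\<dots> \<le> nw" using small mult_right_mono[OF small, of nw] by (simp add: nw_def sum_nonneg)
  finally show "0 \<le> Re (((1\<^sub>m n + of_real s \<cdot>\<^sub>m Z) *\<^sub>v w) \<bullet>c w)" by (simp add: form)
qed (use Z in simp)

lemma psd_congruence:
  fixes X :: "complex mat"
  assumes A: "psd n A" and X: "X \<in> carrier_mat n r"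
  shows "psd r (mat_adjoint X * A * X)"
  unfolding psd_def
proof (intro conjI ballI)
  have A_carrier: "A \<in> carrier_mat n n" using A by (simp add: psd_def)
  then show "mat_adjoint X * A * X \<in> carrier_mat r r" using X by (meson mat_adjoint_carrier_mat mult_carrier_mat)
  fix v :: "complex vec" assume v: "v \<in> carrier_vec r"
  have Xv: "X *\<^sub>v v \<in> carrier_vec n" using X v by simp
  have Xa: "mat_adjoint X \<in> carrier_mat r n" using X by simp
  have "(mat_adjoint X * A * X *\<^sub>v v) \<bullet>c v = (mat_adjoint X *\<^sub>v (A *\<^sub>v (X *\<^sub>v v))) \<bullet>c v"
    using assoc_mult_mat_vec[OF mult_carrier_mat[OF Xa A_carrier] X v] assoc_mult_mat_vec[OF Xa A_carrier Xv]
    by simp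
  also have "\<dots> = (A *\<^sub>v (X *\<^sub>v v)) \<bullet>c (X *\<^sub>v v)"
    using cscalar_prod_mat_adjoint[OF X _ v] A_carrier Xv by simp
  finally show "Im ((mat_adjoint X * A * X *\<^sub>v v) \<bullet>c v) = 0" "0 \<le> Re ((mat_adjoint X * A * X *\<^sub>v v) \<bullet>c v)"
    using A Xv unfolding psd_def by auto
qed

lemma psd_gram_perturbation:
  fixes X Z :: "complex mat"
  assumes X: "X \<in> carrier_mat n r" and Z: "Z \<in> carrier_mat n n" and herm: "mat_adjoint Z = Z"
  shows "\<exists>e>0. \<forall>s. \<bar>s\<bar> \<le> e \<longrightarrow> psd r (mat_adjoint X * X + of_real s \<cdot>\<^sub>m (mat_adjoint X * Z * X))"
proof (intro exI conjI allI impI)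
  define e where "e = 1 / (1 + (\<Sum>i<n. \<Sum>j<n. cmod (Z $$ (i, j))))"
  have sum_nonneg: "0 \<le> (\<Sum>i<n. \<Sum>j<n. cmod (Z $$ (i, j)))" by (intro sum_nonneg) auto
  then show "0 < e" by (simp add: e_def)
  fix s assume "\<bar>s\<bar> \<le> e"
  then have "\<bar>s\<bar> * (\<Sum>i<n. \<Sum>j<n. cmod (Z $$ (i, j))) \<le> 1"
    using sum_nonneg by (simp add: e_def field_simps)
  then have "psd r (mat_adjoint X * (1\<^sub>m n + of_real s \<cdot>\<^sub>m Z) * X)"
    by (intro psd_congruence[OF psd_one_plus_smult_hermitian[OF Z herm] X])
  also have "mat_adjoint X * (1\<^sub>m n + of_real s \<cdot>\<^sub>m Z) * X = mat_adjoint X * X + of_real s \<cdot>\<^sub>m (mat_adjoint X * Z * X)"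
    using mult_add_mult_distrib_mat[OF mat_adjoint_carrier_mat[OF X] one_carrier_mat smult_carrier_mat[OF Z] X]
      mult_smult_mult_mat[OF mat_adjoint_carrier_mat[OF X] Z X] X by simp
  finally show "psd r (mat_adjoint X * X + of_real s \<cdot>\<^sub>m (mat_adjoint X * Z * X))" .
qed

lemma extreme_point_symmetric_perturbation:
  assumes ext: "extreme_point C R" and R: "R \<in> carrier_mat n n" and D: "D \<in> carrier_mat n n"
    and a: "a \<noteq> 0" and plus: "R + a \<cdot>\<^sub>m D \<in> C" and minus: "R + (- a) \<cdot>\<^sub>m D \<in> C"
  shows "D = 0\<^sub>m n n"
proof (rule eq_matI)
  have midpoint: "R = of_real (1 / 2) \<cdot>\<^sub>m (R + a \<cdot>\<^sub>m D) + of_real (1 - 1 / 2) \<cdot>\<^sub>m (R + (- a) \<cdot>\<^sub>m D)"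
    by (rule eq_matI) (use R D in \<open>simp_all add: field_simps\<close>)
  have "R1 = R" if "R1 \<in> C" "R2 \<in> C" "0 < t" "t < 1" "R = of_real t \<cdot>\<^sub>m R1 + of_real (1 - t) \<cdot>\<^sub>m R2"
    for R1 R2 and t :: real
    using ext that unfolding extreme_point_def by blast
  from this[OF plus minus _ _ midpoint] have sum: "R + a \<cdot>\<^sub>m D = R" by simp
  fix i j assume "i < dim_row (0\<^sub>m n n)" "j < dim_col (0\<^sub>m n n)"
  then show "D $$ (i, j) = 0\<^sub>m n n $$ (i, j)"
    using arg_cong[OF sum, of "\<lambda>M. M $$ (i, j)"] R D a by simp
qed (use D in auto)

section \<open>Ranks and Gram matrices\<close>

lemma exists_vanishing_lincomb:
  fixes F :: "'t \<Rightarrow> complex mat"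
  assumes T: "finite T" and card: "r * c < card T"
  shows "\<exists>a. (\<exists>t\<in>T. a t \<noteq> 0) \<and> mat r c (\<lambda>ij. \<Sum>t\<in>T. a t * F t $$ ij) = 0\<^sub>m r c"
proof -
  define N where "N = card T"
  obtain g where g: "bij_betw g {0..<N} T" using ex_bij_betw_nat_finite[OF T] unfolding N_def by blast
  \<comment> \<open>the coefficient matrix of the F t, padded with zero rows to a square, hence singular, matrix\<close>
  define A :: "complex mat" where
    "A = mat N N (\<lambda>(i, s). if i < r * c then F (g s) $$ (i div c, i mod c) else 0)"
  have A: "A \<in> carrier_mat N N" unfolding A_def by simp
  have "det A = (\<Sum>j<N. A $$ (r * c, j) * cofactor A (r * c) j)"
    by (rule laplace_expansion_row[OF A]) (use card N_def in simp)
  also have "\<dots> = 0" using card unfolding N_def A_def by simp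
  finally obtain v where v: "v \<in> carrier_vec N" "v \<noteq> 0\<^sub>v N" "A *\<^sub>v v = 0\<^sub>v N"
    using det_0_iff_vec_prod_zero_field[OF A] by blast
  define a where "a t = v $ inv_into {0..<N} g t" for t
  have a_g: "a (g s) = v $ s" if "s < N" for s
    using g that by (simp add: a_def bij_betw_def inv_into_f_f)
  obtain s where s: "s < N" "v $ s \<noteq> 0" using v(1,2) by (metis carrier_vecD eq_vecI index_zero_vec)
  have "g s \<in> T" using g s(1) by (auto simp: bij_betw_def)
  moreover have "a (g s) \<noteq> 0" using a_g s by simp
  ultimately have "\<exists>t\<in>T. a t \<noteq> 0" by blast
  moreover have "(\<Sum>t\<in>T. a t * F t $$ (i, j)) = 0" if ij: "i < r" "j < c" for i j
  proof -
    have rc: "i * c + j < r * c" using tensor_index_less[OF ij] .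
    then have rcN: "i * c + j < N" using card by (simp add: N_def)
    have div_mod: "(i * c + j) div c = i" "(i * c + j) mod c = j" "j mod c = j" using ij by auto
    have "(\<Sum>t\<in>T. a t * F t $$ (i, j)) = (\<Sum>s\<in>{0..<N}. a (g s) * F (g s) $$ (i, j))"
      using sum.reindex_bij_betw[OF g, of "\<lambda>t. a t * F t $$ (i, j)"] by simp
    also have "\<dots> = (\<Sum>s\<in>{0..<N}. A $$ (i * c + j, s) * v $ s)"
      by (intro sum.cong refl) (simp add: A_def rc rcN div_mod a_g)
    also have "\<dots> = (A *\<^sub>v v) $ (i * c + j)"
      using A v(1) rcN by (simp add: scalar_prod_def)
    finally show ?thesis using v(3) rcN by simp
  qed
  ultimately show ?thesis by (intro exI[of _ a]) (auto intro!: eq_matI)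
qed

lemma (in vec_space) mult_mat_vec_eq_lincomb_cols:
  assumes X: "X \<in> carrier_mat n c" and u: "u \<in> carrier_vec c" and J: "J \<subseteq> {..<c}"
    and inj: "inj_on (col X) J" and supp: "\<forall>p<c. p \<notin> J \<longrightarrow> u $ p = 0"
  shows "X *\<^sub>v u = lincomb (\<lambda>v. u $ the_inv_into J (col X) v) (col X ` J)"
proof -
  have cols: "col X ` J \<subseteq> carrier_vec n" using X by auto
  have fin: "finite (col X ` J)" using J finite_subset by blast
  show ?thesis
  proof (rule eq_vecI)
    fix i assume "i < dim_vec (lincomb (\<lambda>v. u $ the_inv_into J (col X) v) (col X ` J))"
    then have i: "i < n" using lincomb_dim[OF fin cols] by simp
    have "(X *\<^sub>v u) $ i = (\<Sum>p\<in>{0..<c}. X $$ (i, p) * u $ p)"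
      using X u i by (simp add: scalar_prod_def)
    also have "\<dots> = (\<Sum>p\<in>J. X $$ (i, p) * u $ p)"
      using J supp by (intro sum.mono_neutral_right) auto
    also have "\<dots> = (\<Sum>v\<in>col X ` J. u $ the_inv_into J (col X) v * v $ i)"
      using X J i inj by (simp add: sum.reindex the_inv_into_f_f subset_eq mult.commute)
    also have "\<dots> = lincomb (\<lambda>v. u $ the_inv_into J (col X) v) (col X ` J) $ i"
      by (rule lincomb_index[symmetric, OF i cols])
    finally show "(X *\<^sub>v u) $ i = lincomb (\<lambda>v. u $ the_inv_into J (col X) v) (col X ` J) $ i" .
  qed (use X lincomb_dim[OF fin cols] in simp)
qed

lemma exists_independent_columns:
  fixes X :: "complex mat"
  assumes X: "X \<in> carrier_mat r c"
  shows "\<exists>J\<subseteq>{..<c}. card J = mrank X \<and>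
    (\<forall>u\<in>carrier_vec c. (\<forall>p<c. p \<notin> J \<longrightarrow> u $ p = 0) \<longrightarrow> X *\<^sub>v u = 0\<^sub>v r \<longrightarrow> u = 0\<^sub>v c)"
proof -
  interpret vs: vec_space "TYPE(complex)" r .
  obtain S where max: "maximal S (\<lambda>T. T \<subseteq> set (cols X) \<and> vs.lin_indpt T)"
    using maximal_exists[of "\<lambda>T. T \<subseteq> set (cols X) \<and> vs.lin_indpt T" "card (set (cols X))" "{}"]
    by (meson List.finite_set card_mono empty_iff empty_subsetI vs.finite_lin_indpt2 rev_finite_subset)
  have rank: "mrank X = card S" unfolding mrank_def using X vs.rank_card_indpt[OF X max] by simp
  have SX: "S \<subseteq> set (cols X)" and indpt: "vs.lin_indpt S" using max unfolding maximal_def by auto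
  have finS: "finite S" using SX finite_subset by blast
  have "\<forall>v\<in>S. \<exists>j. j < c \<and> col X j = v"
  proof
    fix v assume "v \<in> S"
    then have "v \<in> set (cols X)" using SX by blast
    then obtain j where "j < length (cols X)" "cols X ! j = v" by (metis in_set_conv_nth)
    then show "\<exists>j. j < c \<and> col X j = v" using X by auto
  qed
  then obtain idx where idx: "\<And>v. v \<in> S \<Longrightarrow> idx v < c \<and> col X (idx v) = v"
    using bchoice[of S "\<lambda>v j. j < c \<and> col X j = v"] by blast
  define J where "J = idx ` S"
  have J: "J \<subseteq> {..<c}" using idx by (auto simp: J_def)
  have "col X ` J = id ` S" unfolding J_def image_image by (rule image_cong) (simp_all add: idx)
  then have cols_J: "col X ` J = S" by simp
  have inj_idx: "inj_on idx S" using idx by (intro inj_onI) metis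
  have inj: "inj_on (col X) J" using idx by (auto simp: J_def intro!: inj_onI)
  have "u = 0\<^sub>v c" if u: "u \<in> carrier_vec c" and supp: "\<forall>p<c. p \<notin> J \<longrightarrow> u $ p = 0"
     and ker: "X *\<^sub>v u = 0\<^sub>v r" for u
  proof -
    define a where "a v = u $ the_inv_into J (col X) v" for v
    have "vs.lincomb a S = 0\<^sub>v r"
      using vs.mult_mat_vec_eq_lincomb_cols[OF X u J inj supp] ker cols_J by (simp add: a_def[abs_def])
    then have a0: "a \<in> S \<rightarrow> {0}" using vs.not_lindepD[OF indpt finS subset_refl] by auto
    have "u $ p = 0" if "p \<in> J" for p
    proof -
      have "a (col X p) = 0" using a0 cols_J that by auto
      then show ?thesis using the_inv_into_f_f[OF inj that] by (simp add: a_def)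
    qed
    then show ?thesis using u supp by (intro eq_vecI) auto
  qed
  moreover have "card J = mrank X" using card_image[OF inj_idx] rank by (simp add: J_def)
  ultimately show ?thesis using J by blast
qed

lemma gram_kernel:
  fixes X :: "complex mat"
  assumes X: "X \<in> carrier_mat r c" and u: "u \<in> carrier_vec c"
    and "mat_adjoint X * X *\<^sub>v u = 0\<^sub>v c"
  shows "X *\<^sub>v u = 0\<^sub>v r"
proof -
  have Xu: "X *\<^sub>v u \<in> carrier_vec r" using X u by simp
  have "(X *\<^sub>v u) \<bullet>c (X *\<^sub>v u) = (mat_adjoint X *\<^sub>v (X *\<^sub>v u)) \<bullet>c u"
    using cscalar_prod_mat_adjoint[OF X Xu u] by simp
  also have "\<dots> = (mat_adjoint X * X *\<^sub>v u) \<bullet>c u"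
    using assoc_mult_mat_vec[OF mat_adjoint_carrier_mat[OF X] X u] by simp
  finally have "(X *\<^sub>v u) \<bullet>c (X *\<^sub>v u) = 0" using assms(3) u by simp
  then show ?thesis using conjugate_square_eq_0_vec[OF Xu] by simp
qed

lemma mult_eq_zero_supported_right:
  fixes P Q :: "complex mat"
  assumes P: "P \<in> carrier_mat m m" and Q: "Q \<in> carrier_mat m c"
    and inj: "\<And>u. u \<in> carrier_vec m \<Longrightarrow> (\<forall>p<m. p \<notin> J \<longrightarrow> u $ p = 0) \<Longrightarrow> P *\<^sub>v u = 0\<^sub>v m \<Longrightarrow> u = 0\<^sub>v m"
    and supp: "\<And>p q. p < m \<Longrightarrow> q < c \<Longrightarrow> p \<notin> J \<Longrightarrow> Q $$ (p, q) = 0"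
    and PQ: "P * Q = 0\<^sub>m m c"
  shows "Q = 0\<^sub>m m c"
proof (rule eq_matI)
  fix i j assume "i < dim_row (0\<^sub>m m c)" "j < dim_col (0\<^sub>m m c)"
  then have i: "i < m" and j: "j < c" by auto
  have col: "col Q j \<in> carrier_vec m" using col_dim[of Q j] Q by simp
  have "P *\<^sub>v col Q j = col (P * Q) j" by (rule col_mult2[OF P Q j, symmetric])
  also have "\<dots> = 0\<^sub>v m" using PQ j by simp
  finally have "col Q j = 0\<^sub>v m" using inj[OF col] supp j Q by auto
  moreover have "Q $$ (i, j) = col Q j $ i" using Q i j by simp
  ultimately show "Q $$ (i, j) = 0\<^sub>m m c $$ (i, j)" using i j by simp
qed (use Q in auto)

lemma gram_sandwich_nonzero:
  fixes X C :: "complex mat"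
  assumes X: "X \<in> carrier_mat r m" and C: "C \<in> carrier_mat m m"
    and indep: "\<And>u. u \<in> carrier_vec m \<Longrightarrow> (\<forall>p<m. p \<notin> J \<longrightarrow> u $ p = 0) \<Longrightarrow> X *\<^sub>v u = 0\<^sub>v r \<Longrightarrow> u = 0\<^sub>v m"
    and supp: "\<And>p q. p < m \<Longrightarrow> q < m \<Longrightarrow> C $$ (p, q) \<noteq> 0 \<Longrightarrow> p \<in> J \<and> q \<in> J"
    and "C \<noteq> 0\<^sub>m m m"
  shows "mat_adjoint X * X * C * (mat_adjoint X * X) \<noteq> 0\<^sub>m m m"
proof
  define P where "P = mat_adjoint X * X"
  have P: "P \<in> carrier_mat m m" using mult_carrier_mat[OF mat_adjoint_carrier_mat[OF X] X] by (simp add: P_def)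
  assume "mat_adjoint X * X * C * (mat_adjoint X * X) = 0\<^sub>m m m"
  then have PCP: "P * (C * P) = 0\<^sub>m m m" using assoc_mult_mat[OF P C P] by (simp add: P_def)
  have P_herm: "mat_adjoint P = P" using X by (simp add: P_def mat_adjoint_mult[of _ m r _ m])
  have injP: "u = 0\<^sub>v m" if u: "u \<in> carrier_vec m" "\<forall>p<m. p \<notin> J \<longrightarrow> u $ p = 0" "P *\<^sub>v u = 0\<^sub>v m" for u
  proof -
    have "X *\<^sub>v u = 0\<^sub>v r" using gram_kernel[OF X u(1)] u(3) by (simp add: P_def)
    then show ?thesis using indep u(1,2) by blast
  qed
  have "C * P = 0\<^sub>m m m"
  proof (rule mult_eq_zero_supported_right[OF P _ injP _ PCP])
    fix p q assume p: "p < m" and q: "q < m" and pJ: "p \<notin> J"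
    have "(C * P) $$ (p, q) = (\<Sum>i\<in>{0..<m}. C $$ (p, i) * P $$ (i, q))"
      using C P p q by (simp add: scalar_prod_def)
    also have "\<dots> = 0" using supp p pJ by (intro sum.neutral) fastforce
    finally show "(C * P) $$ (p, q) = 0" .
  qed (use C P in auto)
  then have PC: "P * mat_adjoint C = 0\<^sub>m m m"
    using mat_adjoint_mult[OF C P] P_herm by simp
  have "mat_adjoint C = 0\<^sub>m m m"
  proof (rule mult_eq_zero_supported_right[OF P mat_adjoint_carrier_mat[OF C] injP _ PC])
    fix p q assume "p < m" "q < m" "p \<notin> J"
    then show "mat_adjoint C $$ (p, q) = 0" using supp[of q p] C by auto
  qed
  then have "C = 0\<^sub>m m m" by (metis mat_adjoint_mat_adjoint mat_adjoint_zero)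
  with assms(5) show False by simp
qed

lemma eq_zero_if_hermitian_parts_zero:
  fixes E :: "complex mat"
  assumes E: "E \<in> carrier_mat n n" and parts: "\<And>a. a \<cdot>\<^sub>m E + cnj a \<cdot>\<^sub>m mat_adjoint E = 0\<^sub>m n n"
  shows "E = 0\<^sub>m n n"
proof (rule eq_matI)
  fix i j assume ij: "i < dim_row (0\<^sub>m n n)" "j < dim_col (0\<^sub>m n n)"
  have "a * E $$ (i, j) + cnj a * cnj (E $$ (j, i)) = 0" for a
    using arg_cong[OF parts[of a], of "\<lambda>M. M $$ (i, j)"] E ij by auto
  from this[of 1] this[of \<i>] show "E $$ (i, j) = 0\<^sub>m n n $$ (i, j)" using ij by (simp add: algebra_simps)
qed (use E in auto)

section \<open>Linear maps on tuples of blocks\<close>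

definition block_carrier :: "nat \<Rightarrow> (nat \<Rightarrow> nat) \<Rightarrow> (nat \<Rightarrow> complex mat) set" where
  "block_carrier n m = {A. \<forall>k<n. A k \<in> carrier_mat (m k) (m k)}"

lemma mem_block_carrier[simp]: "A \<in> block_carrier n m \<longleftrightarrow> (\<forall>k<n. A k \<in> carrier_mat (m k) (m k))"
  by (simp add: block_carrier_def)

definition block_linear ::
  "nat \<Rightarrow> (nat \<Rightarrow> nat) \<Rightarrow> nat \<Rightarrow> nat \<Rightarrow> ((nat \<Rightarrow> complex mat) \<Rightarrow> complex mat) \<Rightarrow> bool" where
  "block_linear n m r c \<Phi> \<longleftrightarrow>
     (\<forall>A\<in>block_carrier n m. \<Phi> A \<in> carrier_mat r c) \<and>
     (\<forall>A B. (\<forall>k<n. A k = B k) \<longrightarrow> \<Phi> A = \<Phi> B) \<and>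
     (\<forall>A\<in>block_carrier n m. \<forall>B\<in>block_carrier n m. \<Phi> (\<lambda>k. A k + B k) = \<Phi> A + \<Phi> B) \<and>
     (\<forall>A\<in>block_carrier n m. \<forall>a. \<Phi> (\<lambda>k. a \<cdot>\<^sub>m A k) = a \<cdot>\<^sub>m \<Phi> A)"

lemma block_linearI:
  assumes "\<And>A. A \<in> block_carrier n m \<Longrightarrow> \<Phi> A \<in> carrier_mat r c"
    and "\<And>A B. (\<And>k. k < n \<Longrightarrow> A k = B k) \<Longrightarrow> \<Phi> A = \<Phi> B"
    and "\<And>A B. A \<in> block_carrier n m \<Longrightarrow> B \<in> block_carrier n m \<Longrightarrow> \<Phi> (\<lambda>k. A k + B k) = \<Phi> A + \<Phi> B"
    and "\<And>A a. A \<in> block_carrier n m \<Longrightarrow> \<Phi> (\<lambda>k. a \<cdot>\<^sub>m A k) = a \<cdot>\<^sub>m \<Phi> A"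
  shows "block_linear n m r c \<Phi>"
  using assms unfolding block_linear_def by blast

context
  fixes n m r c \<Phi>
  assumes lin: "block_linear n m r c \<Phi>"
begin

lemma block_linear_carrier_mat: "A \<in> block_carrier n m \<Longrightarrow> \<Phi> A \<in> carrier_mat r c"
  using lin unfolding block_linear_def by blast

lemma block_linear_cong: "(\<And>k. k < n \<Longrightarrow> A k = B k) \<Longrightarrow> \<Phi> A = \<Phi> B"
  using lin unfolding block_linear_def by blast

lemma block_linear_add:
  "A \<in> block_carrier n m \<Longrightarrow> B \<in> block_carrier n m \<Longrightarrow> \<Phi> (\<lambda>k. A k + B k) = \<Phi> A + \<Phi> B"
  using lin unfolding block_linear_def by blast

lemma block_linear_smult: "A \<in> block_carrier n m \<Longrightarrow> \<Phi> (\<lambda>k. a \<cdot>\<^sub>m A k) = a \<cdot>\<^sub>m \<Phi> A"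
  using lin unfolding block_linear_def by blast

lemma block_linear_zero: "\<Phi> (\<lambda>k. 0\<^sub>m (m k) (m k)) = 0\<^sub>m r c"
proof -
  have zero: "(\<lambda>k. 0\<^sub>m (m k) (m k)) \<in> block_carrier n m" by simp
  have "\<Phi> (\<lambda>k. 0\<^sub>m (m k) (m k)) = \<Phi> (\<lambda>k. 0 \<cdot>\<^sub>m 0\<^sub>m (m k) (m k))"
    by (rule block_linear_cong) auto
  also have "\<dots> = 0 \<cdot>\<^sub>m \<Phi> (\<lambda>k. 0\<^sub>m (m k) (m k))"
    using zero by (rule block_linear_smult)
  also have "\<dots> = 0\<^sub>m r c"
    using block_linear_carrier_mat[OF zero] by (intro eq_matI) auto
  finally show ?thesis .
qed

lemma block_linear_lincomb:
  assumes "finite T" "\<And>t. t \<in> T \<Longrightarrow> F t \<in> block_carrier n m"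
  shows "\<Phi> (\<lambda>k. mat (m k) (m k) (\<lambda>ij. \<Sum>t\<in>T. a t * F t k $$ ij)) =
    mat r c (\<lambda>ij. \<Sum>t\<in>T. a t * \<Phi> (F t) $$ ij)"
  using assms
proof (induction T rule: finite_induct)
  case empty
  have "\<Phi> (\<lambda>k. mat (m k) (m k) (\<lambda>ij. \<Sum>t\<in>{}. a t * F t k $$ ij)) = \<Phi> (\<lambda>k. 0\<^sub>m (m k) (m k))"
    by (rule block_linear_cong) auto
  then show ?case by (auto simp: block_linear_zero)
next
  case (insert s T)
  let ?comb = "\<lambda>T k. mat (m k) (m k) (\<lambda>ij. \<Sum>t\<in>T. a t * F t k $$ ij)"
  have Fs: "F s \<in> block_carrier n m" and comb: "?comb T \<in> block_carrier n m" using insert by auto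
  have "?comb (insert s T) k = a s \<cdot>\<^sub>m F s k + ?comb T k" if "k < n" for k
    using insert(1,2) Fs that by (intro eq_matI) auto
  then have "\<Phi> (?comb (insert s T)) = \<Phi> (\<lambda>k. a s \<cdot>\<^sub>m F s k + ?comb T k)"
    by (rule block_linear_cong)
  also have "\<dots> = a s \<cdot>\<^sub>m \<Phi> (F s) + \<Phi> (?comb T)"
    using Fs comb by (simp add: block_linear_add block_linear_smult)
  finally show ?case
    using insert block_linear_carrier_mat[OF Fs] block_linear_carrier_mat[OF comb] by (auto intro!: eq_matI)
qed

end

lemma block_linear_sandwich:
  assumes lin: "block_linear n m r c \<Phi>" and X: "X \<in> block_carrier n m" and Y: "Y \<in> block_carrier n m"
  shows "block_linear n m r c (\<lambda>A. \<Phi> (\<lambda>k. X k * A k * Y k))"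
proof (rule block_linearI)
  fix A B assume A: "A \<in> block_carrier n m" and B: "B \<in> block_carrier n m"
  have "X k * (A k + B k) * Y k = X k * A k * Y k + X k * B k * Y k" if "k < n" for k
    using that X Y A B by (intro mult_add_mult_distrib_mat[of "X k" "m k" "m k" "A k" "B k" "Y k" "m k"]) auto
  then have "\<Phi> (\<lambda>k. X k * (A k + B k) * Y k) = \<Phi> (\<lambda>k. X k * A k * Y k + X k * B k * Y k)"
    by (rule block_linear_cong[OF lin])
  also have "\<dots> = \<Phi> (\<lambda>k. X k * A k * Y k) + \<Phi> (\<lambda>k. X k * B k * Y k)"
    using X Y A B by (intro block_linear_add[OF lin]) auto
  finally show "\<Phi> (\<lambda>k. X k * (A k + B k) * Y k) = \<Phi> (\<lambda>k. X k * A k * Y k) + \<Phi> (\<lambda>k. X k * B k * Y k)" .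
next
  fix A a assume A: "A \<in> block_carrier n m"
  have "X k * (a \<cdot>\<^sub>m A k) * Y k = a \<cdot>\<^sub>m (X k * A k * Y k)" if "k < n" for k
    using that X Y A by (intro mult_smult_mult_mat[of "X k" "m k" "m k" "A k" "Y k" "m k"]) auto
  then have "\<Phi> (\<lambda>k. X k * (a \<cdot>\<^sub>m A k) * Y k) = \<Phi> (\<lambda>k. a \<cdot>\<^sub>m (X k * A k * Y k))"
    by (rule block_linear_cong[OF lin])
  also have "\<dots> = a \<cdot>\<^sub>m \<Phi> (\<lambda>k. X k * A k * Y k)"
    using X Y A by (intro block_linear_smult[OF lin]) auto
  finally show "\<Phi> (\<lambda>k. X k * (a \<cdot>\<^sub>m A k) * Y k) = a \<cdot>\<^sub>m \<Phi> (\<lambda>k. X k * A k * Y k)" .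
qed (use assms in \<open>auto intro!: block_linear_carrier_mat[OF lin] block_linear_cong[OF lin]\<close>)

lemma block_linear_ptrace_K:
  assumes lin: "block_linear n m (dK * dH) (dK * dH) \<Phi>"
  shows "block_linear n m dH dH (\<lambda>A. ptrace_K dK dH (\<Phi> A))"
  by (rule block_linearI)
    (auto simp: block_linear_add[OF lin] block_linear_smult[OF lin] block_linear_carrier_mat[OF lin]
      ptrace_K_add ptrace_K_smult cong: block_linear_cong[OF lin])

lemma block_linear_vanishing_supported_block:
  assumes lin: "block_linear n m r c \<Phi>" and T: "finite T" and card: "r * c < card T"
  shows "\<exists>a. (\<exists>t\<in>T. a t \<noteq> 0) \<and>
    \<Phi> (\<lambda>k. mat (m k) (m k) (\<lambda>(p, q). if (k, p, q) \<in> T then a (k, p, q) else 0)) = 0\<^sub>m r c"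
proof -
  define E :: "nat \<times> nat \<times> nat \<Rightarrow> nat \<Rightarrow> complex mat" where
    "E t k = mat (m k) (m k) (\<lambda>(p, q). if t = (k, p, q) then 1 else 0)" for t k
  obtain a where a: "\<exists>t\<in>T. a t \<noteq> 0" and vanish: "mat r c (\<lambda>ij. \<Sum>t\<in>T. a t * \<Phi> (E t) $$ ij) = 0\<^sub>m r c"
    using exists_vanishing_lincomb[OF T card, where F = "\<lambda>t. \<Phi> (E t)"] by blast
  have entry: "(\<Sum>t\<in>T. a t * E t k $$ (p, q)) = (if (k, p, q) \<in> T then a (k, p, q) else 0)"
    if "p < m k" "q < m k" for k p q
  proof -
    have "(\<Sum>t\<in>T. a t * E t k $$ (p, q)) = (\<Sum>t\<in>T. if t = (k, p, q) then a t else 0)"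
      using that by (intro sum.cong) (simp_all add: E_def)
    then show ?thesis using T by (simp add: sum.delta)
  qed
  have combination: "(\<lambda>k. mat (m k) (m k) (\<lambda>(p, q). if (k, p, q) \<in> T then a (k, p, q) else 0)) =
      (\<lambda>k. mat (m k) (m k) (\<lambda>ij. \<Sum>t\<in>T. a t * E t k $$ ij))"
  proof (intro ext eq_matI)
    fix k i j assume "i < dim_row (mat (m k) (m k) (\<lambda>ij. \<Sum>t\<in>T. a t * E t k $$ ij))"
      "j < dim_col (mat (m k) (m k) (\<lambda>ij. \<Sum>t\<in>T. a t * E t k $$ ij))"
    then show "mat (m k) (m k) (\<lambda>(p, q). if (k, p, q) \<in> T then a (k, p, q) else 0) $$ (i, j) =
        mat (m k) (m k) (\<lambda>ij. \<Sum>t\<in>T. a t * E t k $$ ij) $$ (i, j)"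
      using entry[of i k j] by simp
  qed simp_all
  have "\<Phi> (\<lambda>k. mat (m k) (m k) (\<lambda>ij. \<Sum>t\<in>T. a t * E t k $$ ij)) =
      mat r c (\<lambda>ij. \<Sum>t\<in>T. a t * \<Phi> (E t) $$ ij)"
    by (rule block_linear_lincomb[OF lin T]) (simp add: E_def)
  then show ?thesis using a vanish combination by auto
qed

lemma independent_column_sets:
  assumes "X \<in> block_carrier n m"
  obtains J where "\<And>k. k < n \<Longrightarrow> J k \<subseteq> {..<m k}" "\<And>k. k < n \<Longrightarrow> card (J k) = mrank (X k)"
    "\<And>k u. k < n \<Longrightarrow> u \<in> carrier_vec (m k) \<Longrightarrow> \<forall>p<m k. p \<notin> J k \<longrightarrow> u $ p = 0 \<Longrightarrow>
      X k *\<^sub>v u = 0\<^sub>v (m k) \<Longrightarrow> u = 0\<^sub>v (m k)"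
proof -
  have "\<forall>k\<in>{..<n}. \<exists>J\<subseteq>{..<m k}. card J = mrank (X k) \<and> (\<forall>u\<in>carrier_vec (m k).
      (\<forall>p<m k. p \<notin> J \<longrightarrow> u $ p = 0) \<longrightarrow> X k *\<^sub>v u = 0\<^sub>v (m k) \<longrightarrow> u = 0\<^sub>v (m k))"
    using assms exists_independent_columns by simp
  from bchoice[OF this] obtain J where "\<forall>k\<in>{..<n}. J k \<subseteq> {..<m k} \<and> card (J k) = mrank (X k) \<and>
      (\<forall>u\<in>carrier_vec (m k). (\<forall>p<m k. p \<notin> J k \<longrightarrow> u $ p = 0) \<longrightarrow> X k *\<^sub>v u = 0\<^sub>v (m k) \<longrightarrow> u = 0\<^sub>v (m k))"
    by blast
  then show ?thesis by (intro that[of J]) auto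
qed

lemma block_linear_kernel_gram_sandwich:
  assumes lin: "block_linear n m r c \<Phi>" and X: "X \<in> block_carrier n m"
    and S: "S \<subseteq> {..<n}" and rank: "r * c < (\<Sum>k\<in>S. (mrank (X k))\<^sup>2)"
  shows "\<exists>C\<in>block_carrier n m. \<Phi> C = 0\<^sub>m r c \<and>
    (\<exists>k<n. mat_adjoint (X k) * X k * C k * (mat_adjoint (X k) * X k) \<noteq> 0\<^sub>m (m k) (m k))"
proof -
  obtain J where J_sub: "\<And>k. k < n \<Longrightarrow> J k \<subseteq> {..<m k}"
    and J_card: "\<And>k. k < n \<Longrightarrow> card (J k) = mrank (X k)"
    and J_indep: "\<And>k u. k < n \<Longrightarrow> u \<in> carrier_vec (m k) \<Longrightarrow> \<forall>p<m k. p \<notin> J k \<longrightarrow> u $ p = 0 \<Longrightarrow>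
      X k *\<^sub>v u = 0\<^sub>v (m k) \<Longrightarrow> u = 0\<^sub>v (m k)"
    using independent_column_sets[OF X] by blast
  define T where "T = Sigma S (\<lambda>k. J k \<times> J k)"
  have finS: "finite S" using S finite_subset by blast
  have finJ: "finite (J k)" if "k \<in> S" for k using J_sub[of k] S that finite_subset by blast
  have finT: "finite T" unfolding T_def using finS finJ by blast
  have "card T = (\<Sum>k\<in>S. card (J k \<times> J k))" unfolding T_def using finS finJ by (intro card_SigmaI) auto
  also have "\<dots> = (\<Sum>k\<in>S. (mrank (X k))\<^sup>2)"
    using S J_card by (intro sum.cong) (auto simp: card_cartesian_product power2_eq_square)
  finally obtain a where a: "\<exists>t\<in>T. a t \<noteq> 0"
    and vanish: "\<Phi> (\<lambda>k. mat (m k) (m k) (\<lambda>(p, q). if (k, p, q) \<in> T then a (k, p, q) else 0)) = 0\<^sub>m r c"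
    using block_linear_vanishing_supported_block[OF lin finT] rank by auto
  define C where "C k = mat (m k) (m k) (\<lambda>(p, q). if (k, p, q) \<in> T then a (k, p, q) else 0)" for k
  obtain k p q where kpq: "(k, p, q) \<in> T" "a (k, p, q) \<noteq> 0" using a by auto
  then have "k \<in> S" "p \<in> J k" "q \<in> J k" by (auto simp: T_def)
  then have k: "k < n" and pq: "p < m k" "q < m k" using S J_sub by auto
  have C_carrier: "C \<in> block_carrier n m" by (simp add: C_def)
  have "C k $$ (p, q) = a (k, p, q)" using kpq(1) pq by (simp add: C_def)
  then have C_nz: "C k \<noteq> 0\<^sub>m (m k) (m k)" using kpq(2) pq by auto
  have C_supp: "p' \<in> J k \<and> q' \<in> J k" if "p' < m k" "q' < m k" "C k $$ (p', q') \<noteq> 0" for p' q'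
    using that by (auto simp: C_def T_def split: if_splits)
  have Xk: "X k \<in> carrier_mat (m k) (m k)" and Ck: "C k \<in> carrier_mat (m k) (m k)" using X C_carrier k by auto
  have "mat_adjoint (X k) * X k * C k * (mat_adjoint (X k) * X k) \<noteq> 0\<^sub>m (m k) (m k)"
    by (rule gram_sandwich_nonzero[OF Xk Ck J_indep[OF k] C_supp C_nz])
  moreover have "\<Phi> C = 0\<^sub>m r c" using vanish by (simp add: C_def[abs_def])
  ultimately show ?thesis using k C_carrier by blast
qed

lemma hermitian_combination:
  fixes Y :: "complex mat"
  assumes Y: "Y \<in> carrier_mat n n"
  shows "mat_adjoint (a \<cdot>\<^sub>m Y + cnj a \<cdot>\<^sub>m mat_adjoint Y) = a \<cdot>\<^sub>m Y + cnj a \<cdot>\<^sub>m mat_adjoint Y"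
proof -
  have "mat_adjoint (a \<cdot>\<^sub>m Y + cnj a \<cdot>\<^sub>m mat_adjoint Y) = cnj a \<cdot>\<^sub>m mat_adjoint Y + a \<cdot>\<^sub>m Y"
    using Y by (simp add: mat_adjoint_add[of _ n n] mat_adjoint_smult)
  also have "\<dots> = a \<cdot>\<^sub>m Y + cnj a \<cdot>\<^sub>m mat_adjoint Y"
    by (rule comm_add_mat[of _ n n]) (use Y in simp_all)
  finally show ?thesis .
qed

lemma sandwich_hermitian_combination:
  fixes X Y :: "complex mat"
  assumes X: "X \<in> carrier_mat n n" and Y: "Y \<in> carrier_mat n n"
  shows "mat_adjoint X * (a \<cdot>\<^sub>m Y + cnj a \<cdot>\<^sub>m mat_adjoint Y) * X =
    a \<cdot>\<^sub>m (mat_adjoint X * Y * X) + cnj a \<cdot>\<^sub>m mat_adjoint (mat_adjoint X * Y * X)"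
proof -
  have Xa: "mat_adjoint X \<in> carrier_mat n n" and Ya: "mat_adjoint Y \<in> carrier_mat n n" using X Y by simp_all
  have "mat_adjoint X * (a \<cdot>\<^sub>m Y + cnj a \<cdot>\<^sub>m mat_adjoint Y) * X =
      a \<cdot>\<^sub>m (mat_adjoint X * Y * X) + cnj a \<cdot>\<^sub>m (mat_adjoint X * mat_adjoint Y * X)"
    using mult_add_mult_distrib_mat[OF Xa smult_carrier_mat[OF Y] smult_carrier_mat[OF Ya] X]
      mult_smult_mult_mat[OF Xa Y X] mult_smult_mult_mat[OF Xa Ya X]
    by simp
  also have "mat_adjoint X * mat_adjoint Y * X = mat_adjoint (mat_adjoint X * Y * X)"
    using mat_adjoint_mult_mult[OF Xa Y X] by simp
  finally show ?thesis .
qed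

lemma block_linear_hermitian_kernel_element:
  assumes lin: "block_linear n m r r \<Phi>"
    and adj: "\<And>A. A \<in> block_carrier n m \<Longrightarrow> \<Phi> (\<lambda>k. mat_adjoint (A k)) = mat_adjoint (\<Phi> A)"
    and Y: "Y \<in> block_carrier n m" and ker: "\<Phi> Y = 0\<^sub>m r r"
    and k0: "k0 < n" and X: "X \<in> carrier_mat (m k0) (m k0)"
    and nz: "mat_adjoint X * Y k0 * X \<noteq> 0\<^sub>m (m k0) (m k0)"
  shows "\<exists>Z\<in>block_carrier n m. (\<forall>k<n. mat_adjoint (Z k) = Z k) \<and> \<Phi> Z = 0\<^sub>m r r \<and>
    mat_adjoint X * Z k0 * X \<noteq> 0\<^sub>m (m k0) (m k0)"
proof -
  define Z where "Z a k = a \<cdot>\<^sub>m Y k + cnj a \<cdot>\<^sub>m mat_adjoint (Y k)" for a k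
  have Y_adj: "(\<lambda>k. mat_adjoint (Y k)) \<in> block_carrier n m" using Y by simp
  have Z: "Z a \<in> block_carrier n m" for a using Y by (simp add: Z_def)
  have herm: "mat_adjoint (Z a k) = Z a k" if "k < n" for a k
    using hermitian_combination[of "Y k" "m k"] Y that by (simp add: Z_def)
  have ker_Z: "\<Phi> (Z a) = 0\<^sub>m r r" for a
  proof -
    have "\<Phi> (Z a) = \<Phi> (\<lambda>k. a \<cdot>\<^sub>m Y k) + \<Phi> (\<lambda>k. cnj a \<cdot>\<^sub>m mat_adjoint (Y k))"
      unfolding Z_def by (rule block_linear_add[OF lin]) (use Y in simp_all)
    also have "\<dots> = a \<cdot>\<^sub>m \<Phi> Y + cnj a \<cdot>\<^sub>m \<Phi> (\<lambda>k. mat_adjoint (Y k))"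
      using block_linear_smult[OF lin Y] block_linear_smult[OF lin Y_adj] by simp
    finally show ?thesis using adj[OF Y] ker by simp
  qed
  have Yk: "Y k0 \<in> carrier_mat (m k0) (m k0)" using Y k0 by simp
  have E: "mat_adjoint X * Y k0 * X \<in> carrier_mat (m k0) (m k0)" using X Yk by simp
  have "\<exists>a. mat_adjoint X * Z a k0 * X \<noteq> 0\<^sub>m (m k0) (m k0)"
  proof (rule ccontr)
    assume "\<not> ?thesis"
    then have "mat_adjoint X * Z a k0 * X = 0\<^sub>m (m k0) (m k0)" for a by blast
    then have "a \<cdot>\<^sub>m (mat_adjoint X * Y k0 * X) + cnj a \<cdot>\<^sub>m mat_adjoint (mat_adjoint X * Y k0 * X) =
        0\<^sub>m (m k0) (m k0)" for a
      using sandwich_hermitian_combination[OF X Yk, of a] unfolding Z_def by metis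
    then have "mat_adjoint X * Y k0 * X = 0\<^sub>m (m k0) (m k0)"
      by (rule eq_zero_if_hermitian_parts_zero[OF E])
    with nz show False by simp
  qed
  then show ?thesis using Z herm ker_Z by blast
qed

section \<open>The commutant\<close>

lemma comm_elem_cong: "(\<And>k. k < n \<Longrightarrow> A k = B k) \<Longrightarrow> comm_elem n d W A = comm_elem n d W B"
  unfolding comm_elem_def by (metis (no_types, lifting) blockdiag_cong)

locale isotypic_frame =
  fixes dK dH n :: nat and d m :: "nat \<Rightarrow> nat" and W :: "complex mat"
  assumes dim_sum: "(\<Sum>k<n. d k * m k) = dK * dH"
    and unitary_W: "unitary (dK * dH) W"
    and irrep_dim_pos: "\<forall>k<n. 0 < d k"
begin

(* the operator (+)_k (I_{H_k} (x) M_k), written in the basis adapted to the decomposition *)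
definition ampliation :: "(nat \<Rightarrow> complex mat) \<Rightarrow> complex mat" where
  "ampliation M = blockdiag n (\<lambda>k. kron (1\<^sub>m (d k)) (M k))"

lemma comm_elem_ampliation: "comm_elem n d W M = W * ampliation M * mat_adjoint W"
  by (simp add: comm_elem_def ampliation_def)

lemma ampliation_carrier_mat:
  assumes "M \<in> block_carrier n m"
  shows "ampliation M \<in> carrier_mat (dK * dH) (dK * dH)"
  unfolding ampliation_def dim_sum[symmetric]
  by (rule blockdiag_carrier_mat) (use assms in \<open>auto intro: kron_one_carrier_mat\<close>)

lemma ampliation_mult:
  assumes "A \<in> block_carrier n m" "B \<in> block_carrier n m"
  shows "ampliation A * ampliation B = ampliation (\<lambda>k. A k * B k)"
proof -
  have "kron (1\<^sub>m (d k)) (A k) * kron (1\<^sub>m (d k)) (B k) = kron (1\<^sub>m (d k)) (A k * B k)" if "k < n" for k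
    using that assms by (simp add: kron_one_mult[of "A k" "m k" "m k" "B k" "m k"])
  then show ?thesis unfolding ampliation_def using assms
    by (subst blockdiag_mult[where r = "\<lambda>k. d k * m k" and s = "\<lambda>k. d k * m k" and c = "\<lambda>k. d k * m k"])
      (auto intro!: blockdiag_cong kron_one_carrier_mat)
qed

lemma ampliation_mat_adjoint:
  assumes "A \<in> block_carrier n m"
  shows "mat_adjoint (ampliation A) = ampliation (\<lambda>k. mat_adjoint (A k))"
proof -
  have "mat_adjoint (kron (1\<^sub>m (d k)) (A k)) = kron (1\<^sub>m (d k)) (mat_adjoint (A k))" if "k < n" for k
    using that assms by (simp add: kron_one_mat_adjoint[of _ "m k" "m k"])
  then show ?thesis unfolding ampliation_def using assms
    by (subst blockdiag_mat_adjoint[where r = "\<lambda>k. d k * m k" and c = "\<lambda>k. d k * m k"])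
      (auto intro!: blockdiag_cong kron_one_carrier_mat)
qed

lemma ampliation_add:
  assumes "A \<in> block_carrier n m" "B \<in> block_carrier n m"
  shows "ampliation (\<lambda>k. A k + B k) = ampliation A + ampliation B"
proof -
  have "kron (1\<^sub>m (d k)) (A k + B k) = kron (1\<^sub>m (d k)) (A k) + kron (1\<^sub>m (d k)) (B k)" if "k < n" for k
    using that assms by (simp add: kron_one_add[of "A k" "m k" "m k" "B k"])
  then show ?thesis unfolding ampliation_def using assms
    by (subst blockdiag_add[symmetric, where r = "\<lambda>k. d k * m k" and c = "\<lambda>k. d k * m k"])
      (auto intro!: blockdiag_cong kron_one_carrier_mat)
qed

lemma ampliation_smult:
  assumes "A \<in> block_carrier n m"
  shows "ampliation (\<lambda>k. a \<cdot>\<^sub>m A k) = a \<cdot>\<^sub>m ampliation A"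
proof -
  have "kron (1\<^sub>m (d k)) (a \<cdot>\<^sub>m A k) = a \<cdot>\<^sub>m kron (1\<^sub>m (d k)) (A k)" if "k < n" for k
    using that assms by (simp add: kron_one_smult[of _ "m k" "m k"])
  then show ?thesis unfolding ampliation_def using assms
    by (subst blockdiag_smult[symmetric, where r = "\<lambda>k. d k * m k" and c = "\<lambda>k. d k * m k"])
      (auto intro!: blockdiag_cong kron_one_carrier_mat)
qed

lemma ampliation_eq_zeroD:
  assumes A: "A \<in> block_carrier n m" and zero: "ampliation A = 0\<^sub>m (dK * dH) (dK * dH)" and k: "k < n"
  shows "A k = 0\<^sub>m (m k) (m k)"
proof -
  have "kron (1\<^sub>m (d k)) (A k) = 0\<^sub>m (d k * m k) (d k * m k)"
    using zero A k unfolding ampliation_def dim_sum[symmetric]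
    by (intro blockdiag_eq_zeroD[where r = "\<lambda>k. d k * m k" and c = "\<lambda>k. d k * m k"])
      (auto intro: kron_one_carrier_mat)
  then show ?thesis using A k irrep_dim_pos kron_one_eq_zeroD by auto
qed

lemma comm_elem_carrier_mat:
  "M \<in> block_carrier n m \<Longrightarrow> comm_elem n d W M \<in> carrier_mat (dK * dH) (dK * dH)"
  by (simp add: comm_elem_ampliation unitary_conj_carrier_mat[OF unitary_W] ampliation_carrier_mat)

lemma comm_elem_mult:
  assumes "A \<in> block_carrier n m" "B \<in> block_carrier n m"
  shows "comm_elem n d W A * comm_elem n d W B = comm_elem n d W (\<lambda>k. A k * B k)"
proof -
  have "(\<lambda>k. A k * B k) \<in> block_carrier n m" using assms by (auto intro: mult_carrier_mat)
  then show ?thesis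
    using assms by (simp add: comm_elem_ampliation unitary_conj_mult[OF unitary_W]
        ampliation_carrier_mat ampliation_mult)
qed

lemma comm_elem_mat_adjoint:
  assumes "A \<in> block_carrier n m"
  shows "mat_adjoint (comm_elem n d W A) = comm_elem n d W (\<lambda>k. mat_adjoint (A k))"
proof -
  have "(\<lambda>k. mat_adjoint (A k)) \<in> block_carrier n m" using assms by auto
  then show ?thesis
    using assms by (simp add: comm_elem_ampliation unitary_conj_mat_adjoint[OF unitary_W]
        ampliation_carrier_mat ampliation_mat_adjoint)
qed

lemma comm_elem_add:
  assumes "A \<in> block_carrier n m" "B \<in> block_carrier n m"
  shows "comm_elem n d W (\<lambda>k. A k + B k) = comm_elem n d W A + comm_elem n d W B"
proof -
  have "(\<lambda>k. A k + B k) \<in> block_carrier n m" using assms by auto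
  then show ?thesis
    using assms by (simp add: comm_elem_ampliation unitary_conj_add[OF unitary_W]
        ampliation_carrier_mat ampliation_add)
qed

lemma comm_elem_smult:
  assumes "A \<in> block_carrier n m"
  shows "comm_elem n d W (\<lambda>k. a \<cdot>\<^sub>m A k) = a \<cdot>\<^sub>m comm_elem n d W A"
proof -
  have "(\<lambda>k. a \<cdot>\<^sub>m A k) \<in> block_carrier n m" using assms by auto
  then show ?thesis
    using assms by (simp add: comm_elem_ampliation unitary_conj_smult[OF unitary_W]
        ampliation_carrier_mat ampliation_smult)
qed

lemma comm_elem_eq_zeroD:
  assumes "A \<in> block_carrier n m" "comm_elem n d W A = 0\<^sub>m (dK * dH) (dK * dH)" "k < n"
  shows "A k = 0\<^sub>m (m k) (m k)"
  using assms unitary_conj_eq_zeroD[OF unitary_W ampliation_carrier_mat] ampliation_eq_zeroD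
  by (simp add: comm_elem_ampliation)

lemma block_linear_comm_elem: "block_linear n m (dK * dH) (dK * dH) (comm_elem n d W)"
proof (rule block_linearI)
  show "comm_elem n d W A = comm_elem n d W B" if "\<And>k. k < n \<Longrightarrow> A k = B k" for A B
    using that by (rule comm_elem_cong)
qed (simp_all add: comm_elem_carrier_mat comm_elem_add comm_elem_smult del: mem_block_carrier)

definition reduced_sandwich :: "(nat \<Rightarrow> complex mat) \<Rightarrow> (nat \<Rightarrow> complex mat) \<Rightarrow> complex mat" where
  "reduced_sandwich X Z = ptrace_K dK dH (comm_elem n d W (\<lambda>k. mat_adjoint (X k) * Z k * X k))"

lemma block_linear_reduced_sandwich:
  assumes "X \<in> block_carrier n m"
  shows "block_linear n m dH dH (reduced_sandwich X)"
  using block_linear_sandwich[OF block_linear_ptrace_K[OF block_linear_comm_elem], of "\<lambda>k. mat_adjoint (X k)" X]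
    assms
  unfolding reduced_sandwich_def[abs_def] by simp

lemma reduced_sandwich_mat_adjoint:
  assumes X: "X \<in> block_carrier n m" and Z: "Z \<in> block_carrier n m"
  shows "reduced_sandwich X (\<lambda>k. mat_adjoint (Z k)) = mat_adjoint (reduced_sandwich X Z)"
proof -
  have E: "(\<lambda>k. mat_adjoint (X k) * Z k * X k) \<in> block_carrier n m" using X Z by simp
  have "mat_adjoint (X k) * mat_adjoint (Z k) * X k = mat_adjoint (mat_adjoint (X k) * Z k * X k)" if "k < n" for k
    using X Z that mat_adjoint_mult_mult[of "mat_adjoint (X k)" "m k" "m k" "Z k" "X k" "m k"] by simp
  then have "comm_elem n d W (\<lambda>k. mat_adjoint (X k) * mat_adjoint (Z k) * X k) =
      comm_elem n d W (\<lambda>k. mat_adjoint (mat_adjoint (X k) * Z k * X k))"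
    by (rule comm_elem_cong)
  also have "\<dots> = mat_adjoint (comm_elem n d W (\<lambda>k. mat_adjoint (X k) * Z k * X k))"
    by (rule comm_elem_mat_adjoint[OF E, symmetric])
  finally have "comm_elem n d W (\<lambda>k. mat_adjoint (X k) * mat_adjoint (Z k) * X k) =
      mat_adjoint (comm_elem n d W (\<lambda>k. mat_adjoint (X k) * Z k * X k))" .
  then show ?thesis
    using ptrace_K_mat_adjoint[OF comm_elem_carrier_mat[OF E]] by (simp add: reduced_sandwich_def)
qed

lemma comm_elem_sandwich:
  assumes X: "X \<in> block_carrier n m" and Z: "Z \<in> block_carrier n m"
  shows "mat_adjoint (comm_elem n d W X) * comm_elem n d W Z * comm_elem n d W X =
    comm_elem n d W (\<lambda>k. mat_adjoint (X k) * Z k * X k)"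
proof -
  have "(\<lambda>k. mat_adjoint (X k)) \<in> block_carrier n m" using X by simp
  then show ?thesis using X Z by (simp add: comm_elem_mat_adjoint comm_elem_mult)
qed

lemma C_set_add_smult:
  assumes R: "comm_elem n d W P \<in> C_set dK dH n d m W K0"
    and P: "P \<in> block_carrier n m" and E: "E \<in> block_carrier n m"
    and trace: "ptrace_K dK dH (comm_elem n d W E) = 0\<^sub>m dH dH"
    and psd: "psd (dK * dH) (comm_elem n d W P + a \<cdot>\<^sub>m comm_elem n d W E)"
  shows "comm_elem n d W P + a \<cdot>\<^sub>m comm_elem n d W E \<in> C_set dK dH n d m W K0"
proof -
  have aE: "(\<lambda>k. a \<cdot>\<^sub>m E k) \<in> block_carrier n m" using E by simp
  have sum: "comm_elem n d W P + a \<cdot>\<^sub>m comm_elem n d W E = comm_elem n d W (\<lambda>k. P k + a \<cdot>\<^sub>m E k)"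
    using comm_elem_add[OF P aE] comm_elem_smult[OF E] by simp
  have "\<forall>k<n. P k + a \<cdot>\<^sub>m E k \<in> carrier_mat (m k) (m k)" using P E by simp
  then have "comm_elem n d W P + a \<cdot>\<^sub>m comm_elem n d W E \<in> commutant n d m W"
    unfolding sum commutant_def by blast
  moreover have "ptrace_K dK dH (comm_elem n d W P + a \<cdot>\<^sub>m comm_elem n d W E) = K0"
  proof -
    have K0: "ptrace_K dK dH (comm_elem n d W P) = K0" using R by (simp add: C_set_def)
    then have "K0 \<in> carrier_mat dH dH" by (metis ptrace_K_carrier_mat)
    then show ?thesis
      using ptrace_K_add[OF comm_elem_carrier_mat[OF P] smult_carrier_mat[OF comm_elem_carrier_mat[OF E]]]
        ptrace_K_smult[OF comm_elem_carrier_mat[OF E]] K0 trace by simp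
  qed
  ultimately show ?thesis using psd unfolding C_set_def by blast
qed

lemma extreme_point_reduced_sandwich_kernel:
  assumes ext: "extreme_point (C_set dK dH n d m W K0) (mat_adjoint (comm_elem n d W X) * comm_elem n d W X)"
    and X: "X \<in> block_carrier n m" and Z: "Z \<in> block_carrier n m" and herm: "\<forall>k<n. mat_adjoint (Z k) = Z k"
    and ker: "reduced_sandwich X Z = 0\<^sub>m dH dH" and k: "k < n"
  shows "mat_adjoint (X k) * Z k * X k = 0\<^sub>m (m k) (m k)"
proof -
  define E where "E k = mat_adjoint (X k) * Z k * X k" for k
  define G where "G k = mat_adjoint (X k) * X k" for k
  have E: "E \<in> block_carrier n m" and G: "G \<in> block_carrier n m" using X Z by (simp_all add: E_def G_def)
  have R: "mat_adjoint (comm_elem n d W X) * comm_elem n d W X = comm_elem n d W G"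
    using X by (simp add: G_def[abs_def] comm_elem_mat_adjoint comm_elem_mult)
  have "mat_adjoint (comm_elem n d W X) * comm_elem n d W Z * comm_elem n d W X = comm_elem n d W E"
    using comm_elem_sandwich[OF X Z] by (simp add: E_def[abs_def])
  moreover have "mat_adjoint (comm_elem n d W Z) = comm_elem n d W Z"
    using comm_elem_mat_adjoint[OF Z] comm_elem_cong[of n "\<lambda>k. mat_adjoint (Z k)" Z] herm by simp
  ultimately obtain e where e: "0 < e"
    and psd: "\<And>s. \<bar>s\<bar> \<le> e \<Longrightarrow> psd (dK * dH) (comm_elem n d W G + of_real s \<cdot>\<^sub>m comm_elem n d W E)"
    using psd_gram_perturbation[OF comm_elem_carrier_mat[OF X] comm_elem_carrier_mat[OF Z]] R by metis
  have trace: "ptrace_K dK dH (comm_elem n d W E) = 0\<^sub>m dH dH"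
    using ker by (simp add: reduced_sandwich_def E_def[abs_def])
  have "comm_elem n d W G \<in> C_set dK dH n d m W K0" using ext R unfolding extreme_point_def by simp
  then have "comm_elem n d W G + of_real s \<cdot>\<^sub>m comm_elem n d W E \<in> C_set dK dH n d m W K0"
    if "\<bar>s\<bar> \<le> e" for s
    using C_set_add_smult[OF _ G E trace psd[OF that]] by blast
  from this[of e] this[of "- e"] have "comm_elem n d W E = 0\<^sub>m (dK * dH) (dK * dH)"
    using extreme_point_symmetric_perturbation[OF ext[unfolded R] comm_elem_carrier_mat[OF G]
        comm_elem_carrier_mat[OF E], of "of_real e"] e by simp
  then show ?thesis using comm_elem_eq_zeroD[OF E _ k] by (simp add: E_def)
qed

end

theorem mainTheorem13:
  fixes G :: "('g, 'b) monoid_scheme"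
    and dK dH n :: nat and U V :: "'g \<Rightarrow> complex mat"
    and d m :: "nat \<Rightarrow> nat" and \<pi> :: "nat \<Rightarrow> 'g \<Rightarrow> complex mat" and W K0 :: "complex mat"
    and Xk :: "nat \<Rightarrow> complex mat"
  assumes "group G"
    and "unitary_rep G dH U" and "unitary_rep G dK V"
    and "isotypic_decomp G dK dH V U n d m \<pi> W"
    and "psd dH K0" and "psd dH (1\<^sub>m dH - K0)"
    and "\<forall>k<n. Xk k \<in> carrier_mat (m k) (m k)"
    and "extreme_point (C_set dK dH n d m W K0)
           (mat_adjoint (comm_elem n d W Xk) * comm_elem n d W Xk)"
  shows "(\<Sum>k\<in>{k. k < n \<and> Xk k \<noteq> 0\<^sub>m (m k) (m k)}. (mrank (Xk k))^2) \<le> dH^2"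
proof (rule ccontr)
  assume "\<not> ?thesis"
  then have big: "dH * dH < (\<Sum>k\<in>{k. k < n \<and> Xk k \<noteq> 0\<^sub>m (m k) (m k)}. (mrank (Xk k))\<^sup>2)"
    by (simp add: power2_eq_square)
  interpret isotypic_frame dK dH n d m W
    using assms(4) by unfold_locales (auto simp: isotypic_decomp_def irreducible_rep_def)
  have X: "Xk \<in> block_carrier n m" using assms(7) by simp
  have "block_linear n m dH dH (\<lambda>C. reduced_sandwich Xk (\<lambda>k. Xk k * C k * mat_adjoint (Xk k)))"
    using block_linear_sandwich[OF block_linear_reduced_sandwich[OF X] X] X by simp
  then obtain C k0 where C: "C \<in> block_carrier n m" and k0: "k0 < n"
    and "reduced_sandwich Xk (\<lambda>k. Xk k * C k * mat_adjoint (Xk k)) = 0\<^sub>m dH dH"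
    and "mat_adjoint (Xk k0) * Xk k0 * C k0 * (mat_adjoint (Xk k0) * Xk k0) \<noteq> 0\<^sub>m (m k0) (m k0)"
    using block_linear_kernel_gram_sandwich[OF _ X _ big] by blast
  then obtain Z where "Z \<in> block_carrier n m" "\<forall>k<n. mat_adjoint (Z k) = Z k"
    "reduced_sandwich Xk Z = 0\<^sub>m dH dH" "mat_adjoint (Xk k0) * Z k0 * Xk k0 \<noteq> 0\<^sub>m (m k0) (m k0)"
    using block_linear_hermitian_kernel_element[OF block_linear_reduced_sandwich[OF X]
        reduced_sandwich_mat_adjoint[OF X], of "\<lambda>k. Xk k * C k * mat_adjoint (Xk k)" k0 "Xk k0"]
      X C gram_sandwich_assoc[of "Xk k0" "m k0" "m k0" "C k0"] by auto
  then show False using extreme_point_reduced_sandwich_kernel[OF assms(8) X] k0 by blast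
qed

end
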